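(* Let $I$ be an infinite set of positive integers and for each $n \in I$ let $H_n \le S_n$ be a subgroup. Suppose that the minimal degrees $m(H_n)$ are not bounded, i.e. for every constant $K$ there are infinitely many $n \in I$ with $m(H_n) > K$. Suppose moreover that for every $n \in I$ and every $k \le n$, $H_n$ has at most $n^{k/7}$ elements of support $k$. Then the family $(S_n, H_n)_{n \in I}$ is indistinguishable.
   Context: For a finite group $G$, let $\mathrm{Irr}(G)$ be its set of complex irreducible characters and $d_\chi=\chi(e)$. For $H \le G$ let $D_H = \frac{1}{|G|}\sum_{\chi \in \mathrm{Irr}(G)} d_\chi \big|\sum_{h \in H, h \neq e}\chi(h)\big|$ (the $L_1$ distance between the distributions $P_H(\chi)=\frac{d_\chi}{|G|}\sum_{h\in H}\chi(h)$ and $P_{\{e\}}$ on $\mathrm{Irr}(G)$ produced by weak quantum Fourier sampling). A family $(G_i,H_i)_{i \in I}$ with $H_i \le G_i$, $I$ an infinite set of positive integers and $|G_i| \to \infty$, is called distinguishable if there is a constant $c>0$ such that $D_{H_i} \ge (\log|G_i|)^{-c}$ for all sufficiently large $i \in I$, and indistinguishable otherwise. $S_n$ is the symmetric group on $\{1,\ldots,n\}$. For $g \in S_n$, the support $\mathrm{supp}(g)$ is the number of points moved by $g$. The minimal degree of $H \le S_n$ is $m(H) = \min\{\mathrm{supp}(h): h \in H, h \neq e\}$, with the convention $m(\{e\}) = +\infty$. *)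

theory Defs
  imports "HOL-Analysis.Analysis" "HOL-Combinatorics.Permutations" "HOL-Library.Extended_Nat"
begin

definition Sym :: "nat \<Rightarrow> (nat \<Rightarrow> nat) set" where
  "Sym n = {p. p permutes {1..n}}"

definition is_subgroup_Sym :: "nat \<Rightarrow> (nat \<Rightarrow> nat) set \<Rightarrow> bool" where
  "is_subgroup_Sym n H \<longleftrightarrow> H \<subseteq> Sym n \<and> id \<in> H \<and>
     (\<forall>g\<in>H. \<forall>h\<in>H. g \<circ> h \<in> H) \<and> (\<forall>h\<in>H. inv h \<in> H)"

text \<open>Square complex matrices of size d, represented as functions; only entries i,j < d matter.\<close>
definition mat_mult :: "nat \<Rightarrow> (nat \<Rightarrow> nat \<Rightarrow> complex) \<Rightarrow> (nat \<Rightarrow> nat \<Rightarrow> complex) \<Rightarrow> (nat \<Rightarrow> nat \<Rightarrow> complex)" where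
  "mat_mult d A B = (\<lambda>i j. \<Sum>k<d. A i k * B k j)"

definition mat_vec :: "nat \<Rightarrow> (nat \<Rightarrow> nat \<Rightarrow> complex) \<Rightarrow> (nat \<Rightarrow> complex) \<Rightarrow> (nat \<Rightarrow> complex)" where
  "mat_vec d A v = (\<lambda>i. if i < d then (\<Sum>k<d. A i k * v k) else 0)"

definition mat_eq :: "nat \<Rightarrow> (nat \<Rightarrow> nat \<Rightarrow> complex) \<Rightarrow> (nat \<Rightarrow> nat \<Rightarrow> complex) \<Rightarrow> bool" where
  "mat_eq d A B \<longleftrightarrow> (\<forall>i<d. \<forall>j<d. A i j = B i j)"

definition cvecs :: "nat \<Rightarrow> (nat \<Rightarrow> complex) set" where
  "cvecs d = {v. \<forall>i\<ge>d. v i = 0}"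

definition is_subspace :: "nat \<Rightarrow> (nat \<Rightarrow> complex) set \<Rightarrow> bool" where
  "is_subspace d W \<longleftrightarrow> W \<subseteq> cvecs d \<and> (\<lambda>_. 0) \<in> W \<and>
     (\<forall>v\<in>W. \<forall>w\<in>W. (\<lambda>i. v i + w i) \<in> W) \<and> (\<forall>c. \<forall>v\<in>W. (\<lambda>i. c * v i) \<in> W)"

definition is_rep :: "nat \<Rightarrow> nat \<Rightarrow> ((nat \<Rightarrow> nat) \<Rightarrow> (nat \<Rightarrow> nat \<Rightarrow> complex)) \<Rightarrow> bool" where
  "is_rep n d \<rho> \<longleftrightarrow> d \<ge> 1 \<and> mat_eq d (\<rho> id) (\<lambda>i j. if i = j then 1 else 0) \<and>
     (\<forall>g\<in>Sym n. \<forall>h\<in>Sym n. mat_eq d (\<rho> (g \<circ> h)) (mat_mult d (\<rho> g) (\<rho> h)))"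

definition is_irrep :: "nat \<Rightarrow> nat \<Rightarrow> ((nat \<Rightarrow> nat) \<Rightarrow> (nat \<Rightarrow> nat \<Rightarrow> complex)) \<Rightarrow> bool" where
  "is_irrep n d \<rho> \<longleftrightarrow> is_rep n d \<rho> \<and>
     (\<forall>W. is_subspace d W \<and> (\<forall>g\<in>Sym n. \<forall>w\<in>W. mat_vec d (\<rho> g) w \<in> W)
          \<longrightarrow> W = {\<lambda>_. 0} \<or> W = cvecs d)"

definition character :: "nat \<Rightarrow> nat \<Rightarrow> ((nat \<Rightarrow> nat) \<Rightarrow> (nat \<Rightarrow> nat \<Rightarrow> complex)) \<Rightarrow> (nat \<Rightarrow> nat) \<Rightarrow> complex" where
  "character n d \<rho> g = (if g \<in> Sym n then (\<Sum>i<d. \<rho> g i i) else 0)"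

definition Irr :: "nat \<Rightarrow> ((nat \<Rightarrow> nat) \<Rightarrow> complex) set" where
  "Irr n = {character n d \<rho> | d \<rho>. is_irrep n d \<rho>}"

text \<open>D_H for H <= S_n; d_chi = chi(e) (a positive integer, so its real part).\<close>
definition D_H :: "nat \<Rightarrow> (nat \<Rightarrow> nat) set \<Rightarrow> real" where
  "D_H n H = (1 / real (card (Sym n))) *
     (\<Sum>chr\<in>Irr n. Re (chr id) * cmod (\<Sum>h\<in>H - {id}. chr h))"

definition supp :: "(nat \<Rightarrow> nat) \<Rightarrow> nat" where
  "supp g = card {x. g x \<noteq> x}"

text \<open>Minimal degree; Inf of the empty set is infinity, so m({e}) = infinity.\<close>
definition min_degree :: "(nat \<Rightarrow> nat) set \<Rightarrow> enat" where
  "min_degree H = (INF h\<in>H - {id}. enat (supp h))"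

definition distinguishable :: "nat set \<Rightarrow> (nat \<Rightarrow> (nat \<Rightarrow> nat) set) \<Rightarrow> bool" where
  "distinguishable I H \<longleftrightarrow> (\<exists>c>0. \<exists>N. \<forall>n\<in>I. n \<ge> N \<longrightarrow>
      D_H n (H n) \<ge> (ln (real (card (Sym n)))) powr (-c))"

definition indistinguishable :: "nat set \<Rightarrow> (nat \<Rightarrow> (nat \<Rightarrow> nat) set) \<Rightarrow> bool" where
  "indistinguishable I H \<longleftrightarrow> \<not> distinguishable I H"

end

(*
  Weak Fourier sampling only sees the class function p(g) = Pr_s [s g s^-1 in H - {e}]: its Fourier
  coefficients are the character sums of H - {e}, so Bessel's inequality and Cauchy-Schwarz over
  Irr(S_n) give D_H^2 <= sum of p(h) over h in H - {e}.  A permutation moving k points commutes with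
  at most (n-k)! k^(k/2) permutations, so p(h) <= n^(k/7) (n-k)! k^(k/2) / n! when H has at most
  n^(k/7) elements of support k, and these elements together contribute at most (e n^(-3/14))^k.
  Summing over k > m(H) gives D_H^2 <= 2 (e n^(-3/14))^(m(H)+1), which is below (log n!)^(-2c)
  once m(H) is large.
*)
theory Submission
  imports Defs "Jordan_Normal_Form.Spectral_Radius" "HOL-Combinatorics.Orbits"
begin

(* Jordan_Normal_Form imports HOL-Algebra, whose group-inverse syntax would capture inv. *)
unbundle no m_inv_syntax

section \<open>Permutations\<close>

lemma Sym_finite [simp]: "finite (Sym n)"
  unfolding Sym_def by (simp add: finite_permutations)

lemma card_Sym: "card (Sym n) = fact n"
  unfolding Sym_def using card_permutations[of "{1..n}" n] by simp

lemma id_in_Sym [simp]: "id \<in> Sym n"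
  unfolding Sym_def by (simp add: permutes_id)

lemma comp_in_Sym [simp]: "g \<in> Sym n \<Longrightarrow> h \<in> Sym n \<Longrightarrow> g \<circ> h \<in> Sym n"
  unfolding Sym_def by (simp add: permutes_compose)

lemma inv_in_Sym [simp]: "g \<in> Sym n \<Longrightarrow> inv g \<in> Sym n"
  unfolding Sym_def by (simp add: permutes_inv)

lemma Sym_bij: "g \<in> Sym n \<Longrightarrow> bij g"
  unfolding Sym_def by (simp add: permutes_bij)

lemma Sym_inv_comp [simp]: "g \<in> Sym n \<Longrightarrow> inv g \<circ> g = id"
  unfolding Sym_def by (simp add: permutes_inv_o(2))

lemma Sym_comp_inv [simp]: "g \<in> Sym n \<Longrightarrow> g \<circ> inv g = id"
  unfolding Sym_def by (simp add: permutes_inv_o(1))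

lemma Sym_inv_apply [simp]:
  assumes "g \<in> Sym n"
  shows "inv g (g x) = x" and "g (inv g x) = x"
  using fun_cong[OF Sym_inv_comp[OF assms]] fun_cong[OF Sym_comp_inv[OF assms]] by simp_all

lemma Sym_inv_inv [simp]: "g \<in> Sym n \<Longrightarrow> inv (inv g) = g"
  using Sym_bij by (simp add: inv_inv_eq)

lemma Sym_inv_comp_distrib: "g \<in> Sym n \<Longrightarrow> h \<in> Sym n \<Longrightarrow> inv (g \<circ> h) = inv h \<circ> inv g"
  using Sym_bij by (simp add: o_inv_distrib)

lemma bij_betw_Sym_left_mult: "h \<in> Sym n \<Longrightarrow> bij_betw (\<lambda>g. h \<circ> g) (Sym n) (Sym n)"
  by (rule bij_betw_byWitness[of _ "\<lambda>g. inv h \<circ> g"]) (auto simp: fun_eq_iff)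

lemma bij_betw_Sym_right_mult: "h \<in> Sym n \<Longrightarrow> bij_betw (\<lambda>g. g \<circ> h) (Sym n) (Sym n)"
  by (rule bij_betw_byWitness[of _ "\<lambda>g. g \<circ> inv h"]) (auto simp: fun_eq_iff)

lemma bij_betw_Sym_conj: "s \<in> Sym n \<Longrightarrow> bij_betw (\<lambda>g. inv s \<circ> g \<circ> s) (Sym n) (Sym n)"
  by (rule bij_betw_byWitness[of _ "\<lambda>g. s \<circ> g \<circ> inv s"]) (auto simp: fun_eq_iff)

lemma Sym_permutes: "h \<in> Sym n \<Longrightarrow> h permutes {1..n}"
  by (simp add: Sym_def)

lemma Sym_permutation: "h \<in> Sym n \<Longrightarrow> permutation h"
  using Sym_permutes permutation_permutes by blast

lemma Sym_moved_subset: "h \<in> Sym n \<Longrightarrow> {x. h x \<noteq> x} \<subseteq> {1..n}"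
  using permutes_not_in[OF Sym_permutes] by blast

lemma supp_le: "h \<in> Sym n \<Longrightarrow> supp h \<le> n"
  unfolding supp_def using card_mono[OF finite_atLeastAtMost Sym_moved_subset] by fastforce

lemma supp_conj:
  assumes s: "s \<in> Sym n"
  shows "supp (s \<circ> h \<circ> inv s) = supp h"
proof -
  have "{x. (s \<circ> h \<circ> inv s) x \<noteq> x} = s ` {y. h y \<noteq> y}"
  proof (intro equalityI subsetI)
    fix x assume "x \<in> {x. (s \<circ> h \<circ> inv s) x \<noteq> x}"
    then have "h (inv s x) \<noteq> inv s x" using s by auto
    moreover have "x = s (inv s x)" using s by simp
    ultimately show "x \<in> s ` {y. h y \<noteq> y}" by blast
  next
    fix x assume "x \<in> s ` {y. h y \<noteq> y}"
    then obtain y where y: "h y \<noteq> y" "x = s y" by blast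
    then have "s (h y) \<noteq> s y" using bij_is_inj[OF Sym_bij[OF s]] by (auto dest: injD)
    then show "x \<in> {x. (s \<circ> h \<circ> inv s) x \<noteq> x}" using s y(2) by simp
  qed
  then show ?thesis
    unfolding supp_def using card_image[OF inj_on_subset[OF bij_is_inj[OF Sym_bij[OF s]]]] by auto
qed

lemma permutation_orbit_eq: "permutation h \<Longrightarrow> y \<in> orbit h x \<Longrightarrow> orbit h y = orbit h x"
  using cyclic_on_orbit' orbit_cyclic_eq3 by metis

lemma permutation_orbit_subset_moved:
  assumes h: "permutation h" and x: "h x \<noteq> x"
  shows "orbit h x \<subseteq> {x. h x \<noteq> x}"
proof
  fix y assume y: "y \<in> orbit h x"
  show "y \<in> {x. h x \<noteq> x}"
  proof (rule ccontr)
    assume "y \<notin> {x. h x \<noteq> x}"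
    then have "orbit h y = {y}" by (simp add: orbit_eq_singleton_iff)
    then have "x = y" using permutation_orbit_eq[OF h y] permutation_self_in_orbit[OF h, of x] by simp
    then show False using x \<open>y \<notin> {x. h x \<noteq> x}\<close> by simp
  qed
qed

text \<open>The minima of the cycles of \<open>h\<close> represent all cycles; \<open>R\<close> and \<open>h ` R\<close> are disjoint
  because every cycle has length at least two.\<close>
lemma permutation_cycle_representatives:
  fixes h :: "'a::linorder \<Rightarrow> 'a"
  assumes h: "permutation h"
  obtains R where "R \<subseteq> {x. h x \<noteq> x}" "2 * card R \<le> card {x. h x \<noteq> x}"
    "\<And>x. h x \<noteq> x \<Longrightarrow> \<exists>r\<in>R. \<exists>j. x = (h ^^ j) r"
proof -
  let ?M = "{x. h x \<noteq> x}"
  define R where "R = {x \<in> ?M. x = Min (orbit h x)}"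
  have min_in: "Min (orbit h x) \<in> orbit h x" for x
    using finite_orbit[OF permutation_self_in_orbit[OF h]] orbit_nonempty by (rule Min_in)
  have reps: "\<exists>r\<in>R. \<exists>j. x = (h ^^ j) r" if x: "h x \<noteq> x" for x
  proof -
    let ?r = "Min (orbit h x)"
    have "orbit h ?r = orbit h x" by (rule permutation_orbit_eq[OF h min_in])
    then have "?r \<in> R" "x \<in> orbit h ?r"
      using permutation_orbit_subset_moved[OF h x] min_in permutation_self_in_orbit[OF h, of x]
      by (auto simp: R_def)
    then show ?thesis by (auto simp: orbit_altdef_permutation[OF h])
  qed
  have "h r \<notin> R" if "r \<in> R" for r
    using that permutation_orbit_step[OF h, of r] by (auto simp: R_def)
  then have disj: "R \<inter> h ` R = {}" by blast
  have finM: "finite ?M" by (rule permutation_finite_support[OF h])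
  have RM: "R \<subseteq> ?M" by (auto simp: R_def)
  then have finR: "finite R" using finM by (rule finite_subset)
  have hR: "h ` R \<subseteq> ?M" using permutation_bijective[OF h] by (auto simp: R_def bij_def dest: injD)
  have "2 * card R = card R + card (h ` R)"
    using card_image[OF inj_on_subset[OF bij_is_inj[OF permutation_bijective[OF h]]]] by simp
  also have "\<dots> = card (R \<union> h ` R)" using finR disj by (simp add: card_Un_disjoint)
  also have "\<dots> \<le> card ?M" using RM hR finM by (intro card_mono) auto
  finally have "2 * card R \<le> card ?M" .
  then show ?thesis by (rule that[OF RM _ reps])
qed

section \<open>Matrices\<close>

lemma index_mult_mat_sum:
  assumes "A \<in> carrier_mat r k" "B \<in> carrier_mat k c" "i < r" "j < c"
  shows "(A * B) $$ (i,j) = (\<Sum>l<k. A $$ (i,l) * B $$ (l,j))"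
  using assms by (simp add: scalar_prod_def lessThan_atLeast0)

lemma index_mult_mat_vec_sum:
  assumes "A \<in> carrier_mat r k" "v \<in> carrier_vec k" "i < r"
  shows "(A *\<^sub>v v) $ i = (\<Sum>l<k. A $$ (i,l) * v $ l)"
  using assms by (simp add: scalar_prod_def lessThan_atLeast0)

definition mat_trace :: "'a::comm_ring mat \<Rightarrow> 'a" where
  "mat_trace A = (\<Sum>i<dim_row A. A $$ (i,i))"

lemma mat_trace_mult_comm:
  assumes A: "A \<in> carrier_mat r c" and B: "B \<in> carrier_mat c r"
  shows "mat_trace (A * B) = mat_trace (B * A)"
proof -
  have "mat_trace (A * B) = (\<Sum>i<r. \<Sum>l<c. A $$ (i,l) * B $$ (l,i))"
    unfolding mat_trace_def using assms
    by (auto simp del: index_mult_mat(1) simp: index_mult_mat_sum[OF A B] intro!: sum.cong)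
  also have "\<dots> = (\<Sum>l<c. \<Sum>i<r. B $$ (l,i) * A $$ (i,l))"
    by (subst sum.swap) (simp add: mult.commute)
  also have "\<dots> = mat_trace (B * A)"
    unfolding mat_trace_def using assms
    by (auto simp del: index_mult_mat(1) simp: index_mult_mat_sum[OF B A] intro!: sum.cong)
  finally show ?thesis .
qed

lemma mat_trace_one [simp]: "mat_trace (1\<^sub>m d) = of_nat d"
  by (simp add: mat_trace_def)

lemma mat_trace_smult_one [simp]: "mat_trace (c \<cdot>\<^sub>m 1\<^sub>m d) = c * of_nat d"
  by (simp add: mat_trace_def mult.commute)

lemma mat_trace_conj:
  fixes A B C :: "'a::comm_ring_1 mat"
  assumes "A \<in> carrier_mat d d" "B \<in> carrier_mat d d" "C \<in> carrier_mat d d" "C * A = 1\<^sub>m d"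
  shows "mat_trace (A * B * C) = mat_trace B"
proof -
  have "mat_trace (A * B * C) = mat_trace (A * (B * C))"
    using assms by (simp add: assoc_mult_mat)
  also have "\<dots> = mat_trace (B * C * A)"
    using assms by (simp add: mat_trace_mult_comm[of A d d])
  also have "B * C * A = B"
    using assms by (simp add: assoc_mult_mat[of B d d C d A d] right_mult_one_mat)
  finally show ?thesis .
qed

definition mat_sum :: "nat \<Rightarrow> nat \<Rightarrow> ('b \<Rightarrow> 'a::comm_monoid_add mat) \<Rightarrow> 'b set \<Rightarrow> 'a mat" where
  "mat_sum r c F G = mat r c (\<lambda>(i,j). \<Sum>g\<in>G. F g $$ (i,j))"

lemma mat_sum_carrier [simp]: "mat_sum r c F G \<in> carrier_mat r c"
  by (simp add: mat_sum_def)

lemma dim_mat_sum [simp]: "dim_row (mat_sum r c F G) = r" "dim_col (mat_sum r c F G) = c"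
  by (simp_all add: mat_sum_def)

lemma index_mat_sum [simp]: "i < r \<Longrightarrow> j < c \<Longrightarrow> mat_sum r c F G $$ (i,j) = (\<Sum>g\<in>G. F g $$ (i,j))"
  by (simp add: mat_sum_def)

lemma mult_mat_sum:
  fixes A :: "'a::comm_semiring_0 mat"
  assumes A: "A \<in> carrier_mat r k" and F: "\<And>g. g \<in> G \<Longrightarrow> F g \<in> carrier_mat k c"
  shows "A * mat_sum k c F G = mat_sum r c (\<lambda>g. A * F g) G"
proof (rule eq_matI)
  fix i j assume "i < dim_row (mat_sum r c (\<lambda>g. A * F g) G)" "j < dim_col (mat_sum r c (\<lambda>g. A * F g) G)"
  then have ij: "i < r" "j < c" by auto
  have "(A * mat_sum k c F G) $$ (i,j) = (\<Sum>l<k. A $$ (i,l) * (\<Sum>g\<in>G. F g $$ (l,j)))"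
    using ij by (simp add: index_mult_mat_sum[OF A mat_sum_carrier])
  also have "\<dots> = (\<Sum>g\<in>G. \<Sum>l<k. A $$ (i,l) * F g $$ (l,j))"
    by (simp add: sum_distrib_left sum.swap[of _ G])
  also have "\<dots> = mat_sum r c (\<lambda>g. A * F g) G $$ (i,j)"
    using ij by (simp add: index_mult_mat_sum[OF A F])
  finally show "(A * mat_sum k c F G) $$ (i,j) = mat_sum r c (\<lambda>g. A * F g) G $$ (i,j)" .
qed (use A in auto)

lemma mat_sum_mult:
  fixes B :: "'a::comm_semiring_0 mat"
  assumes B: "B \<in> carrier_mat k c" and F: "\<And>g. g \<in> G \<Longrightarrow> F g \<in> carrier_mat r k"
  shows "mat_sum r k F G * B = mat_sum r c (\<lambda>g. F g * B) G"
proof (rule eq_matI)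
  fix i j assume "i < dim_row (mat_sum r c (\<lambda>g. F g * B) G)" "j < dim_col (mat_sum r c (\<lambda>g. F g * B) G)"
  then have ij: "i < r" "j < c" by auto
  have "(mat_sum r k F G * B) $$ (i,j) = (\<Sum>l<k. (\<Sum>g\<in>G. F g $$ (i,l)) * B $$ (l,j))"
    using ij by (simp add: index_mult_mat_sum[OF mat_sum_carrier B])
  also have "\<dots> = (\<Sum>g\<in>G. \<Sum>l<k. F g $$ (i,l) * B $$ (l,j))"
    by (simp add: sum_distrib_right sum.swap[of _ G])
  also have "\<dots> = mat_sum r c (\<lambda>g. F g * B) G $$ (i,j)"
    using ij by (simp add: index_mult_mat_sum[OF F B])
  finally show "(mat_sum r k F G * B) $$ (i,j) = mat_sum r c (\<lambda>g. F g * B) G $$ (i,j)" .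
qed (use B in auto)

lemma mat_sum_cong: "(\<And>g. g \<in> G \<Longrightarrow> F g = F' g) \<Longrightarrow> mat_sum r c F G = mat_sum r c F' G"
  unfolding mat_sum_def by (intro cong_mat refl) (simp add: case_prod_beta)

lemma mat_sum_reindex:
  assumes "bij_betw \<phi> G G'"
  shows "mat_sum r c (\<lambda>g. F (\<phi> g)) G = mat_sum r c F G'"
  unfolding mat_sum_def
  by (intro cong_mat refl) (simp add: case_prod_beta sum.reindex_bij_betw[OF assms, of "\<lambda>g. F g $$ _"])

lemma mat_trace_mat_sum:
  assumes "\<And>g. g \<in> G \<Longrightarrow> F g \<in> carrier_mat d d"
  shows "mat_trace (mat_sum d d F G) = (\<Sum>g\<in>G. mat_trace (F g))"
proof -
  have "mat_trace (mat_sum d d F G) = (\<Sum>i<d. \<Sum>g\<in>G. F g $$ (i,i))" by (simp add: mat_trace_def)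
  also have "\<dots> = (\<Sum>g\<in>G. \<Sum>i<d. F g $$ (i,i))" by (rule sum.swap)
  also have "\<dots> = (\<Sum>g\<in>G. mat_trace (F g))"
  proof (rule sum.cong[OF refl])
    fix g assume "g \<in> G"
    then have "dim_row (F g) = d" using carrier_matD(1)[OF assms] by blast
    then show "(\<Sum>i<d. F g $$ (i,i)) = mat_trace (F g)" by (simp add: mat_trace_def)
  qed
  finally show ?thesis .
qed

lemma index_mat_sum_mult_mat_vec:
  assumes F: "\<And>g. g \<in> G \<Longrightarrow> F g \<in> carrier_mat r c" and v: "v \<in> carrier_vec c" and i: "i < r"
  shows "(mat_sum r c F G *\<^sub>v v) $ i = (\<Sum>g\<in>G. (F g *\<^sub>v v) $ i)"
proof -
  have "(mat_sum r c F G *\<^sub>v v) $ i = (\<Sum>l<c. \<Sum>g\<in>G. F g $$ (i,l) * v $ l)"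
    using i by (simp add: index_mult_mat_vec_sum[OF mat_sum_carrier v i] sum_distrib_right)
  also have "\<dots> = (\<Sum>g\<in>G. \<Sum>l<c. F g $$ (i,l) * v $ l)" by (rule sum.swap)
  also have "\<dots> = (\<Sum>g\<in>G. (F g *\<^sub>v v) $ i)"
    using F by (intro sum.cong refl) (simp add: index_mult_mat_vec_sum[OF _ v i])
  finally show ?thesis .
qed

definition elementary_mat :: "nat \<Rightarrow> nat \<Rightarrow> nat \<Rightarrow> nat \<Rightarrow> complex mat" where
  "elementary_mat e d j l = mat e d (\<lambda>(a,b). if a = j \<and> b = l then 1 else 0)"

lemma elementary_mat_carrier [simp]: "elementary_mat e d j l \<in> carrier_mat e d"
  by (simp add: elementary_mat_def)

lemma mat_trace_elementary_mat:
  assumes "j < d"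
  shows "mat_trace (elementary_mat d d j l) = (if j = l then 1 else 0)"
proof -
  have "mat_trace (elementary_mat d d j l) = (\<Sum>a<d. if a = j then (if j = l then 1 else 0) else 0)"
    unfolding mat_trace_def elementary_mat_def by (intro sum.cong) auto
  then show ?thesis using assms by simp
qed

lemma index_mult_elementary_mat:
  assumes A: "A \<in> carrier_mat r e" and B: "B \<in> carrier_mat d c"
    and i: "i < r" and k: "k < c" and j: "j < e" and l: "l < d"
  shows "(A * elementary_mat e d j l * B) $$ (i,k) = A $$ (i,j) * B $$ (l,k)"
proof -
  have AE: "(A * elementary_mat e d j l) $$ (i,b) = (if b = l then A $$ (i,j) else 0)" if b: "b < d" for b
  proof -
    have "(A * elementary_mat e d j l) $$ (i,b) = (\<Sum>a<e. A $$ (i,a) * elementary_mat e d j l $$ (a,b))"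
      by (rule index_mult_mat_sum[OF A elementary_mat_carrier i b])
    also have "\<dots> = (\<Sum>a<e. if a = j then (if b = l then A $$ (i,j) else 0) else 0)"
      using b by (intro sum.cong) (auto simp: elementary_mat_def)
    finally show ?thesis using j by simp
  qed
  have "(A * elementary_mat e d j l * B) $$ (i,k) = (\<Sum>b<d. (A * elementary_mat e d j l) $$ (i,b) * B $$ (b,k))"
    by (rule index_mult_mat_sum[OF mult_carrier_mat[OF A elementary_mat_carrier] B i k])
  also have "\<dots> = (\<Sum>b<d. if b = l then A $$ (i,j) * B $$ (l,k) else 0)"
    by (intro sum.cong) (auto simp: AE)
  also have "\<dots> = A $$ (i,j) * B $$ (l,k)" using l by simp
  finally show ?thesis .
qed

lemma mat_eq_zero_if_kernel_full:
  fixes T :: "'a::semiring_1 mat"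
  assumes T: "T \<in> carrier_mat e d" and ker: "\<And>v. v \<in> carrier_vec d \<Longrightarrow> T *\<^sub>v v = 0\<^sub>v e"
  shows "T = 0\<^sub>m e d"
proof (rule eq_matI)
  fix i j assume "i < dim_row (0\<^sub>m e d :: 'a mat)" "j < dim_col (0\<^sub>m e d :: 'a mat)"
  then have ij: "i < e" "j < d" by auto
  then have "T $$ (i,j) = (T *\<^sub>v unit_vec d j) $ i" using T by simp
  also have "\<dots> = 0" using ker[of "unit_vec d j"] ij by simp
  finally show "T $$ (i,j) = 0\<^sub>m e d $$ (i,j)" using ij by simp
qed (use T in auto)

lemma mult_mat_cancel_left:
  fixes T :: "'a::field mat"
  assumes T: "T \<in> carrier_mat e d" and X: "X \<in> carrier_mat d c" and Y: "Y \<in> carrier_mat d c"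
    and inj: "\<And>v. v \<in> carrier_vec d \<Longrightarrow> T *\<^sub>v v = 0\<^sub>v e \<Longrightarrow> v = 0\<^sub>v d"
    and eq: "T * X = T * Y"
  shows "X = Y"
proof (rule mat_col_eqI)
  fix j assume "j < dim_col Y"
  then have j: "j < c" using Y by simp
  have "T *\<^sub>v (col X j - col Y j) = T *\<^sub>v col X j - T *\<^sub>v col Y j"
    using X Y j by (intro mult_minus_distrib_mat_vec[OF T]) auto
  also have "T *\<^sub>v col X j = T *\<^sub>v col Y j"
    using eq col_mult2[OF T X j] col_mult2[OF T Y j] by simp
  also have "T *\<^sub>v col Y j - T *\<^sub>v col Y j = 0\<^sub>v e"
    using T Y j by (intro minus_cancel_vec) auto
  finally have diff: "col X j - col Y j = 0\<^sub>v d" using inj X Y j by simp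
  show "col X j = col Y j"
  proof (rule eq_vecI)
    fix i assume "i < dim_vec (col Y j)"
    then have "(col X j - col Y j) $ i = 0" and "i < d" using diff Y by auto
    then show "col X j $ i = col Y j $ i" using X Y by simp
  qed (use X Y in simp)
qed (use X Y in auto)

lemma mat_inverse_if_bij:
  fixes T :: "'a::field mat"
  assumes T: "T \<in> carrier_mat e d"
    and inj: "\<And>v. v \<in> carrier_vec d \<Longrightarrow> T *\<^sub>v v = 0\<^sub>v e \<Longrightarrow> v = 0\<^sub>v d"
    and surj: "\<And>w. w \<in> carrier_vec e \<Longrightarrow> \<exists>v\<in>carrier_vec d. T *\<^sub>v v = w"
  obtains S where "S \<in> carrier_mat d e" "T * S = 1\<^sub>m e" "S * T = 1\<^sub>m d"
proof -
  obtain u where u: "\<And>j. j < e \<Longrightarrow> u j \<in> carrier_vec d \<and> T *\<^sub>v u j = unit_vec e j"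
    using surj[OF unit_vec_carrier] by metis
  define S where "S = mat d e (\<lambda>(i,j). u j $ i)"
  have S: "S \<in> carrier_mat d e" by (simp add: S_def)
  have TS: "T * S = 1\<^sub>m e"
  proof (rule mat_col_eqI)
    fix j assume "j < dim_col (1\<^sub>m e :: 'a mat)"
    then have j: "j < e" by simp
    have "col S j = u j" using u[OF j] j by (auto simp: S_def)
    then show "col (T * S) j = col (1\<^sub>m e) j" using u[OF j] j by (simp add: col_mult2[OF T S j])
  qed (use T S in auto)
  have "T * (S * T) = (T * S) * T" by (rule assoc_mult_mat[symmetric, OF T S T])
  also have "\<dots> = T * 1\<^sub>m d" using T by (simp add: TS)
  finally have "T * (S * T) = T * 1\<^sub>m d" .
  then have "S * T = 1\<^sub>m d"
    using mult_mat_cancel_left[OF T mult_carrier_mat[OF S T] one_carrier_mat] inj by blast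
  with S TS show ?thesis by (rule that)
qed

lemma smult_one_mult_mat_vec: "v \<in> carrier_vec d \<Longrightarrow> (c \<cdot>\<^sub>m 1\<^sub>m d) *\<^sub>v v = c \<cdot>\<^sub>v (v :: 'a::comm_ring_1 vec)"
  by (intro eq_vecI) auto

lemma dim_mat_adjoint [simp]:
  "dim_row (mat_adjoint A) = dim_col A" "dim_col (mat_adjoint A) = dim_row A"
  by (simp_all add: mat_adjoint_def)

lemma mat_adjoint_carrier [simp]: "A \<in> carrier_mat r c \<Longrightarrow> mat_adjoint A \<in> carrier_mat c r"
  by (intro carrier_matI) (simp_all add: carrier_matD)

lemma index_mat_adjoint [simp]:
  "i < dim_col A \<Longrightarrow> j < dim_row A \<Longrightarrow> mat_adjoint A $$ (i,j) = conjugate (A $$ (j,i))"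
  by (simp add: mat_adjoint_def mat_of_rows_index)

lemma mat_adjoint_mult:
  fixes A B :: "complex mat"
  assumes A: "A \<in> carrier_mat r k" and B: "B \<in> carrier_mat k c"
  shows "mat_adjoint (A * B) = mat_adjoint B * mat_adjoint A"
proof (rule eq_matI)
  fix i j assume "i < dim_row (mat_adjoint B * mat_adjoint A)" "j < dim_col (mat_adjoint B * mat_adjoint A)"
  then have ij: "i < c" "j < r" using A B by auto
  have "mat_adjoint (A * B) $$ (i,j) = cnj ((A * B) $$ (j,i))"
    using ij A B by (subst index_mat_adjoint) auto
  also have "\<dots> = cnj (\<Sum>l<k. A $$ (j,l) * B $$ (l,i))"
    by (simp only: index_mult_mat_sum[OF A B ij(2,1)])
  also have "\<dots> = (\<Sum>l<k. mat_adjoint B $$ (i,l) * mat_adjoint A $$ (l,j))"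
    using ij A B by (auto simp: mult.commute intro!: sum.cong)
  also have "\<dots> = (mat_adjoint B * mat_adjoint A) $$ (i,j)"
    by (rule index_mult_mat_sum[symmetric, OF mat_adjoint_carrier[OF B] mat_adjoint_carrier[OF A] ij])
  finally show "mat_adjoint (A * B) $$ (i,j) = (mat_adjoint B * mat_adjoint A) $$ (i,j)" .
qed (use A B in auto)

lemma mat_trace_adjoint: "A \<in> carrier_mat d d \<Longrightarrow> mat_trace (mat_adjoint A) = cnj (mat_trace (A :: complex mat))"
  by (simp add: mat_trace_def)

lemma cscalar_prod_sum:
  "w \<in> carrier_vec d \<Longrightarrow> v \<in> carrier_vec d \<Longrightarrow> w \<bullet>c v = (\<Sum>i<d. w $ i * cnj (v $ i))"
  by (simp add: scalar_prod_def lessThan_atLeast0)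

lemma mat_adjoint_cscalar_prod:
  fixes A :: "complex mat"
  assumes A: "A \<in> carrier_mat r c" and v: "v \<in> carrier_vec c" and w: "w \<in> carrier_vec r"
  shows "(mat_adjoint A *\<^sub>v w) \<bullet>c v = w \<bullet>c (A *\<^sub>v v)"
proof -
  have "(mat_adjoint A *\<^sub>v w) \<bullet>c v = (\<Sum>i<c. (mat_adjoint A *\<^sub>v w) $ i * cnj (v $ i))"
    by (rule cscalar_prod_sum[OF mult_mat_vec_carrier[OF mat_adjoint_carrier[OF A] w] v])
  also have "\<dots> = (\<Sum>i<c. (\<Sum>k<r. cnj (A $$ (k,i)) * w $ k) * cnj (v $ i))"
    by (intro sum.cong refl)
      (simp add: index_mult_mat_vec_sum[OF mat_adjoint_carrier[OF A] w] carrier_matD[OF A] del: index_mult_mat_vec)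
  also have "\<dots> = (\<Sum>i<c. \<Sum>k<r. w $ k * cnj (A $$ (k,i) * v $ i))"
    by (simp add: sum_distrib_left sum_distrib_right mult_ac)
  also have "\<dots> = (\<Sum>k<r. w $ k * cnj (\<Sum>i<c. A $$ (k,i) * v $ i))"
    by (subst sum.swap) (simp add: sum_distrib_left)
  also have "\<dots> = (\<Sum>k<r. w $ k * cnj ((A *\<^sub>v v) $ k))"
    by (intro sum.cong refl) (simp add: index_mult_mat_vec_sum[OF A v])
  also have "\<dots> = w \<bullet>c (A *\<^sub>v v)"
    by (rule cscalar_prod_sum[OF w mult_mat_vec_carrier[OF A v], symmetric])
  finally show ?thesis .
qed

section \<open>Representations and Schur's lemma\<close>

definition rep_mat :: "((nat \<Rightarrow> nat) \<Rightarrow> nat \<Rightarrow> nat \<Rightarrow> complex) \<Rightarrow> nat \<Rightarrow> (nat \<Rightarrow> nat) \<Rightarrow> complex mat" where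
  "rep_mat \<rho> d g = mat d d (\<lambda>(i,j). \<rho> g i j)"

lemma rep_mat_carrier [simp]: "rep_mat \<rho> d g \<in> carrier_mat d d"
  by (simp add: rep_mat_def)

lemma rep_mat_dim [simp]: "dim_row (rep_mat \<rho> d g) = d" "dim_col (rep_mat \<rho> d g) = d"
  by (simp_all add: rep_mat_def)

lemma index_rep_mat [simp]: "i < d \<Longrightarrow> j < d \<Longrightarrow> rep_mat \<rho> d g $$ (i,j) = \<rho> g i j"
  by (simp add: rep_mat_def)

lemma mat_trace_rep_mat: "mat_trace (rep_mat \<rho> d g) = (\<Sum>i<d. \<rho> g i i)"
  by (simp add: mat_trace_def rep_mat_def)

lemma character_eq_mat_trace: "g \<in> Sym n \<Longrightarrow> character n d \<rho> g = mat_trace (rep_mat \<rho> d g)"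
  by (simp add: character_def mat_trace_rep_mat)

lemma rep_mat_id: "is_rep n d \<rho> \<Longrightarrow> rep_mat \<rho> d id = 1\<^sub>m d"
  unfolding is_rep_def mat_eq_def rep_mat_def by (intro eq_matI) auto

lemma rep_mat_comp:
  assumes "is_rep n d \<rho>" "g \<in> Sym n" "h \<in> Sym n"
  shows "rep_mat \<rho> d (g \<circ> h) = rep_mat \<rho> d g * rep_mat \<rho> d h"
proof (rule eq_matI)
  fix i j assume "i < dim_row (rep_mat \<rho> d g * rep_mat \<rho> d h)" "j < dim_col (rep_mat \<rho> d g * rep_mat \<rho> d h)"
  then have ij: "i < d" "j < d" by auto
  have "rep_mat \<rho> d (g \<circ> h) $$ (i,j) = mat_mult d (\<rho> g) (\<rho> h) i j"
    using assms ij unfolding is_rep_def mat_eq_def by simp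
  also have "\<dots> = (\<Sum>l<d. rep_mat \<rho> d g $$ (i,l) * rep_mat \<rho> d h $$ (l,j))"
    unfolding mat_mult_def using ij by (intro sum.cong) auto
  also have "\<dots> = (rep_mat \<rho> d g * rep_mat \<rho> d h) $$ (i,j)"
    using ij by (simp only: index_mult_mat_sum[OF rep_mat_carrier rep_mat_carrier])
  finally show "rep_mat \<rho> d (g \<circ> h) $$ (i,j) = (rep_mat \<rho> d g * rep_mat \<rho> d h) $$ (i,j)" .
qed auto

lemma rep_mat_inv_mult: "is_rep n d \<rho> \<Longrightarrow> g \<in> Sym n \<Longrightarrow> rep_mat \<rho> d (inv g) * rep_mat \<rho> d g = 1\<^sub>m d"
  by (metis rep_mat_comp rep_mat_id inv_in_Sym Sym_inv_comp)

lemma rep_mat_mult_inv: "is_rep n d \<rho> \<Longrightarrow> g \<in> Sym n \<Longrightarrow> rep_mat \<rho> d g * rep_mat \<rho> d (inv g) = 1\<^sub>m d"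
  by (metis rep_mat_comp rep_mat_id inv_in_Sym Sym_comp_inv)

lemma irrep_is_rep: "is_irrep n d \<rho> \<Longrightarrow> is_rep n d \<rho>"
  by (simp add: is_irrep_def)

lemma irrep_dim_pos: "is_irrep n d \<rho> \<Longrightarrow> 0 < d"
  by (simp add: is_irrep_def is_rep_def)

definition invariant_subspace :: "nat \<Rightarrow> nat \<Rightarrow> ((nat \<Rightarrow> nat) \<Rightarrow> nat \<Rightarrow> nat \<Rightarrow> complex) \<Rightarrow> complex vec set \<Rightarrow> bool" where
  "invariant_subspace n d \<rho> U \<longleftrightarrow> U \<subseteq> carrier_vec d \<and> 0\<^sub>v d \<in> U \<and>
     (\<forall>u\<in>U. \<forall>w\<in>U. u + w \<in> U) \<and> (\<forall>c. \<forall>u\<in>U. c \<cdot>\<^sub>v u \<in> U) \<and>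
     (\<forall>g\<in>Sym n. \<forall>u\<in>U. rep_mat \<rho> d g *\<^sub>v u \<in> U)"

text \<open>\<^const>\<open>is_irrep\<close> speaks about subspaces of coordinate functions vanishing outside
  \<open>{0..<d}\<close>; \<open>vec_fun d\<close> transports them to subspaces of \<open>carrier_vec d\<close>.\<close>
definition vec_fun :: "nat \<Rightarrow> complex vec \<Rightarrow> nat \<Rightarrow> complex" where
  "vec_fun d u = (\<lambda>i. if i < d then u $ i else 0)"

lemma inj_on_vec_fun: "inj_on (vec_fun d) (carrier_vec d)"
proof (rule inj_onI)
  fix u w assume u: "u \<in> carrier_vec d" and w: "w \<in> carrier_vec d" and eq: "vec_fun d u = vec_fun d w"
  show "u = w"
  proof (rule eq_vecI)
    fix i assume "i < dim_vec w"
    then have "i < d" using w by simp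
    moreover have "vec_fun d u i = vec_fun d w i" using eq by (rule fun_cong)
    ultimately show "u $ i = w $ i" by (simp add: vec_fun_def)
  qed (use u w in simp)
qed

lemma vec_fun_image_carrier: "vec_fun d ` carrier_vec d = cvecs d"
proof (intro equalityI subsetI)
  fix f assume f: "f \<in> cvecs d"
  have "f = vec_fun d (vec d f)"
  proof
    fix i show "f i = vec_fun d (vec d f) i" using f by (simp add: vec_fun_def cvecs_def)
  qed
  then show "f \<in> vec_fun d ` carrier_vec d" by (rule image_eqI) simp
qed (auto simp: vec_fun_def cvecs_def)

lemma vec_fun_zero: "vec_fun d (0\<^sub>v d) = (\<lambda>_. 0)"
  by (simp add: vec_fun_def fun_eq_iff)

lemma vec_fun_add: "u \<in> carrier_vec d \<Longrightarrow> w \<in> carrier_vec d \<Longrightarrow> vec_fun d (u + w) = (\<lambda>i. vec_fun d u i + vec_fun d w i)"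
  by (simp add: vec_fun_def fun_eq_iff)

lemma vec_fun_smult: "u \<in> carrier_vec d \<Longrightarrow> vec_fun d (c \<cdot>\<^sub>v u) = (\<lambda>i. c * vec_fun d u i)"
  by (simp add: vec_fun_def fun_eq_iff)

lemma mat_vec_vec_fun:
  assumes u: "u \<in> carrier_vec d"
  shows "mat_vec d (\<rho> g) (vec_fun d u) = vec_fun d (rep_mat \<rho> d g *\<^sub>v u)"
proof
  fix i show "mat_vec d (\<rho> g) (vec_fun d u) i = vec_fun d (rep_mat \<rho> d g *\<^sub>v u) i"
  proof (cases "i < d")
    case True
    have "mat_vec d (\<rho> g) (vec_fun d u) i = (\<Sum>l<d. \<rho> g i l * vec_fun d u l)"
      using True by (simp add: mat_vec_def)
    also have "\<dots> = (\<Sum>l<d. rep_mat \<rho> d g $$ (i,l) * u $ l)"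
      using True by (intro sum.cong) (simp_all add: vec_fun_def)
    also have "\<dots> = (rep_mat \<rho> d g *\<^sub>v u) $ i"
      using True by (rule index_mult_mat_vec_sum[OF rep_mat_carrier u, symmetric])
    finally show ?thesis using True by (simp add: vec_fun_def)
  qed (simp add: mat_vec_def vec_fun_def)
qed

lemma irrep_invariant_subspace:
  assumes irr: "is_irrep n d \<rho>" and U: "invariant_subspace n d \<rho> U"
  shows "U = {0\<^sub>v d} \<or> U = carrier_vec d"
proof -
  have U_carrier: "U \<subseteq> carrier_vec d" and U0: "0\<^sub>v d \<in> U"
    and U_add: "\<And>u w. u \<in> U \<Longrightarrow> w \<in> U \<Longrightarrow> u + w \<in> U"
    and U_smult: "\<And>c u. u \<in> U \<Longrightarrow> c \<cdot>\<^sub>v u \<in> U"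
    and U_rep: "\<And>g u. g \<in> Sym n \<Longrightarrow> u \<in> U \<Longrightarrow> rep_mat \<rho> d g *\<^sub>v u \<in> U"
    using U unfolding invariant_subspace_def by blast+
  let ?W = "vec_fun d ` U"
  have "is_subspace d ?W"
    unfolding is_subspace_def
  proof (intro conjI ballI allI)
    show "?W \<subseteq> cvecs d" using U_carrier vec_fun_image_carrier by blast
    show "(\<lambda>_. 0) \<in> ?W" using U0 vec_fun_zero[of d] by force
  next
    fix v w assume "v \<in> ?W" "w \<in> ?W"
    then obtain u1 u2 where u: "u1 \<in> U" "u2 \<in> U" "v = vec_fun d u1" "w = vec_fun d u2" by blast
    then have "(\<lambda>i. v i + w i) = vec_fun d (u1 + u2)" using U_carrier by (simp add: vec_fun_add subsetD)
    then show "(\<lambda>i. v i + w i) \<in> ?W" using U_add u by blast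
  next
    fix c v assume "v \<in> ?W"
    then obtain u where u: "u \<in> U" "v = vec_fun d u" by blast
    then have "(\<lambda>i. c * v i) = vec_fun d (c \<cdot>\<^sub>v u)" using U_carrier by (simp add: vec_fun_smult subsetD)
    then show "(\<lambda>i. c * v i) \<in> ?W" using U_smult u by blast
  qed
  moreover have "mat_vec d (\<rho> g) w \<in> ?W" if "g \<in> Sym n" "w \<in> ?W" for g w
  proof -
    obtain u where u: "u \<in> U" "w = vec_fun d u" using \<open>w \<in> ?W\<close> by blast
    then have "mat_vec d (\<rho> g) w = vec_fun d (rep_mat \<rho> d g *\<^sub>v u)"
      using U_carrier by (simp add: mat_vec_vec_fun subsetD)
    then show ?thesis using U_rep[OF \<open>g \<in> Sym n\<close> u(1)] by blast
  qed
  ultimately have "?W = {\<lambda>_. 0} \<or> ?W = cvecs d"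
    using irr unfolding is_irrep_def by blast
  then have "?W = vec_fun d ` {0\<^sub>v d} \<or> ?W = vec_fun d ` carrier_vec d"
    by (simp add: vec_fun_zero vec_fun_image_carrier)
  moreover have "{0\<^sub>v d} \<subseteq> carrier_vec d" by simp
  ultimately show ?thesis
    using inj_on_image_eq_iff[OF inj_on_vec_fun] U_carrier by blast
qed

definition intertwiner ::
  "nat \<Rightarrow> nat \<Rightarrow> ((nat \<Rightarrow> nat) \<Rightarrow> nat \<Rightarrow> nat \<Rightarrow> complex) \<Rightarrow> nat \<Rightarrow> ((nat \<Rightarrow> nat) \<Rightarrow> nat \<Rightarrow> nat \<Rightarrow> complex) \<Rightarrow> complex mat \<Rightarrow> bool" where
  "intertwiner n d \<rho> e \<sigma> T \<longleftrightarrow> T \<in> carrier_mat e d \<and> (\<forall>g\<in>Sym n. rep_mat \<sigma> e g * T = T * rep_mat \<rho> d g)"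

lemma intertwiner_kernel_invariant:
  assumes "intertwiner n d \<rho> e \<sigma> T"
  shows "invariant_subspace n d \<rho> {v \<in> carrier_vec d. T *\<^sub>v v = 0\<^sub>v e}"
  unfolding invariant_subspace_def
proof (intro conjI ballI allI subsetI)
  have T: "T \<in> carrier_mat e d" using assms by (simp add: intertwiner_def)
  show "0\<^sub>v d \<in> {v \<in> carrier_vec d. T *\<^sub>v v = 0\<^sub>v e}" using T by (auto intro: eq_vecI)
  fix u w assume u: "u \<in> {v \<in> carrier_vec d. T *\<^sub>v v = 0\<^sub>v e}" and w: "w \<in> {v \<in> carrier_vec d. T *\<^sub>v v = 0\<^sub>v e}"
  then show "u + w \<in> {v \<in> carrier_vec d. T *\<^sub>v v = 0\<^sub>v e}"
    using T by (simp add: mult_add_distrib_mat_vec)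
next
  have T: "T \<in> carrier_mat e d" using assms by (simp add: intertwiner_def)
  fix c u assume "u \<in> {v \<in> carrier_vec d. T *\<^sub>v v = 0\<^sub>v e}"
  then show "c \<cdot>\<^sub>v u \<in> {v \<in> carrier_vec d. T *\<^sub>v v = 0\<^sub>v e}"
    using T by (auto simp: mult_mat_vec intro!: eq_vecI)
next
  have T: "T \<in> carrier_mat e d" using assms by (simp add: intertwiner_def)
  fix g u assume g: "g \<in> Sym n" and "u \<in> {v \<in> carrier_vec d. T *\<^sub>v v = 0\<^sub>v e}"
  then have u: "u \<in> carrier_vec d" "T *\<^sub>v u = 0\<^sub>v e" by simp_all
  have "T *\<^sub>v (rep_mat \<rho> d g *\<^sub>v u) = (T * rep_mat \<rho> d g) *\<^sub>v u"
    using u by (simp add: assoc_mult_mat_vec[OF T rep_mat_carrier])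
  also have "\<dots> = (rep_mat \<sigma> e g * T) *\<^sub>v u" using assms g by (simp add: intertwiner_def)
  also have "\<dots> = rep_mat \<sigma> e g *\<^sub>v (T *\<^sub>v u)" using u by (simp add: assoc_mult_mat_vec[OF rep_mat_carrier T])
  also have "\<dots> = 0\<^sub>v e" using u by (intro eq_vecI) auto
  finally show "rep_mat \<rho> d g *\<^sub>v u \<in> {v \<in> carrier_vec d. T *\<^sub>v v = 0\<^sub>v e}"
    using mult_mat_vec_carrier[OF rep_mat_carrier u(1)] by simp
qed (simp_all)

lemma intertwiner_image_invariant:
  assumes "intertwiner n d \<rho> e \<sigma> T"
  shows "invariant_subspace n e \<sigma> {T *\<^sub>v v | v. v \<in> carrier_vec d}"
proof -
  have T: "T \<in> carrier_mat e d" using assms by (simp add: intertwiner_def)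
  have "0\<^sub>v e = T *\<^sub>v 0\<^sub>v d" using T by (intro eq_vecI) auto
  moreover have "T *\<^sub>v a + T *\<^sub>v b = T *\<^sub>v (a + b)" if "a \<in> carrier_vec d" "b \<in> carrier_vec d" for a b
    using T that by (simp add: mult_add_distrib_mat_vec)
  moreover have "c \<cdot>\<^sub>v (T *\<^sub>v a) = T *\<^sub>v (c \<cdot>\<^sub>v a)" if "a \<in> carrier_vec d" for c a
    using T that by (simp add: mult_mat_vec)
  moreover have "rep_mat \<sigma> e g *\<^sub>v (T *\<^sub>v a) = T *\<^sub>v (rep_mat \<rho> d g *\<^sub>v a)"
    if "g \<in> Sym n" "a \<in> carrier_vec d" for g a
  proof -
    have "rep_mat \<sigma> e g *\<^sub>v (T *\<^sub>v a) = (rep_mat \<sigma> e g * T) *\<^sub>v a"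
      using that by (simp add: assoc_mult_mat_vec[OF rep_mat_carrier T])
    also have "\<dots> = (T * rep_mat \<rho> d g) *\<^sub>v a" using assms that by (simp add: intertwiner_def)
    also have "\<dots> = T *\<^sub>v (rep_mat \<rho> d g *\<^sub>v a)" using that by (simp add: assoc_mult_mat_vec[OF T rep_mat_carrier])
    finally show ?thesis .
  qed
  ultimately show ?thesis
    unfolding invariant_subspace_def using T
    by (fastforce intro: mult_mat_vec_carrier simp del: assoc_mult_mat_vec)
qed

lemma schur_intertwiner_invertible:
  assumes irr: "is_irrep n d \<rho>" "is_irrep n e \<sigma>" and int: "intertwiner n d \<rho> e \<sigma> T"
    and nz: "T \<noteq> 0\<^sub>m e d"
  obtains S where "S \<in> carrier_mat d e" "T * S = 1\<^sub>m e" "S * T = 1\<^sub>m d"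
proof (rule mat_inverse_if_bij)
  show T: "T \<in> carrier_mat e d" using int by (simp add: intertwiner_def)
  let ?K = "{v \<in> carrier_vec d. T *\<^sub>v v = 0\<^sub>v e}"
  have "?K \<noteq> carrier_vec d"
    using mat_eq_zero_if_kernel_full[OF T] nz by blast
  then have "?K = {0\<^sub>v d}"
    using irrep_invariant_subspace[OF irr(1) intertwiner_kernel_invariant[OF int]] by blast
  then show "v = 0\<^sub>v d" if "v \<in> carrier_vec d" "T *\<^sub>v v = 0\<^sub>v e" for v
    using that by blast
  let ?I = "{T *\<^sub>v v | v. v \<in> carrier_vec d}"
  have "?I \<noteq> {0\<^sub>v e}"
    using mat_eq_zero_if_kernel_full[OF T] nz by blast
  then have "?I = carrier_vec e"
    using irrep_invariant_subspace[OF irr(2) intertwiner_image_invariant[OF int]] by blast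
  then show "\<exists>v\<in>carrier_vec d. T *\<^sub>v v = w" if "w \<in> carrier_vec e" for w
  proof -
    have "w \<in> ?I" using \<open>?I = carrier_vec e\<close> that by simp
    then show ?thesis by auto
  qed
qed

lemma schur_trace_eq:
  assumes irr: "is_irrep n d \<rho>" "is_irrep n e \<sigma>" and int: "intertwiner n d \<rho> e \<sigma> T"
    and nz: "T \<noteq> 0\<^sub>m e d" and g: "g \<in> Sym n"
  shows "mat_trace (rep_mat \<sigma> e g) = mat_trace (rep_mat \<rho> d g)"
proof -
  obtain S where S: "S \<in> carrier_mat d e" "T * S = 1\<^sub>m e" "S * T = 1\<^sub>m d"
    using schur_intertwiner_invertible[OF irr int nz] .
  have T: "T \<in> carrier_mat e d" using int by (simp add: intertwiner_def)
  let ?A = "rep_mat \<sigma> e g" and ?B = "rep_mat \<rho> d g"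
  have "?A = ?A * T * S" using S T by (simp add: assoc_mult_mat[OF rep_mat_carrier T S(1)])
  also have "\<dots> = T * ?B * S" using int g by (simp add: intertwiner_def)
  also have "\<dots> = T * (?B * S)" by (rule assoc_mult_mat[OF T rep_mat_carrier S(1)])
  finally have "mat_trace ?A = mat_trace ((?B * S) * T)"
    using T S by (simp add: mat_trace_mult_comm[OF T mult_carrier_mat[OF rep_mat_carrier S(1)]])
  also have "\<dots> = mat_trace ?B" using S T by (simp add: assoc_mult_mat[OF rep_mat_carrier S(1) T])
  finally show ?thesis .
qed

lemma intertwiner_minus_scalar:
  assumes "intertwiner n d \<rho> d \<rho> T"
  shows "intertwiner n d \<rho> d \<rho> (T - c \<cdot>\<^sub>m 1\<^sub>m d)"
  unfolding intertwiner_def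
proof (intro conjI ballI)
  have T: "T \<in> carrier_mat d d" using assms by (simp add: intertwiner_def)
  show "T - c \<cdot>\<^sub>m 1\<^sub>m d \<in> carrier_mat d d" by (simp add: minus_carrier_mat)
  fix g assume g: "g \<in> Sym n"
  let ?R = "rep_mat \<rho> d g"
  have "?R * (T - c \<cdot>\<^sub>m 1\<^sub>m d) = ?R * T - c \<cdot>\<^sub>m ?R"
    using T by (simp add: mult_minus_distrib_mat[OF rep_mat_carrier] mult_smult_distrib[OF rep_mat_carrier one_carrier_mat])
  also have "\<dots> = T * ?R - c \<cdot>\<^sub>m ?R" using assms g by (simp add: intertwiner_def)
  also have "\<dots> = (T - c \<cdot>\<^sub>m 1\<^sub>m d) * ?R"
    by (simp add: minus_mult_distrib_mat[OF T smult_carrier_mat[OF one_carrier_mat] rep_mat_carrier]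
        mult_smult_assoc_mat[OF one_carrier_mat rep_mat_carrier])
  finally show "?R * (T - c \<cdot>\<^sub>m 1\<^sub>m d) = (T - c \<cdot>\<^sub>m 1\<^sub>m d) * ?R" .
qed

lemma schur_scalar:
  assumes irr: "is_irrep n d \<rho>" and int: "intertwiner n d \<rho> d \<rho> T"
  obtains c where "T = c \<cdot>\<^sub>m 1\<^sub>m d"
proof -
  have T: "T \<in> carrier_mat d d" using int by (simp add: intertwiner_def)
  obtain c where "c \<in> spectrum T"
    using spectrum_non_empty[OF T irrep_dim_pos[OF irr]] by blast
  then obtain v where v: "v \<in> carrier_vec d" "v \<noteq> 0\<^sub>v d" "T *\<^sub>v v = c \<cdot>\<^sub>v v"
    using T unfolding spectrum_def eigenvalue_def eigenvector_def by auto
  let ?T' = "T - c \<cdot>\<^sub>m 1\<^sub>m d"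
  have T'v: "?T' *\<^sub>v v = 0\<^sub>v d"
    using T v by (simp add: minus_mult_distrib_mat_vec smult_one_mult_mat_vec)
  have "?T' = 0\<^sub>m d d"
  proof (rule ccontr)
    assume "?T' \<noteq> 0\<^sub>m d d"
    then obtain S where S: "S \<in> carrier_mat d d" "S * ?T' = 1\<^sub>m d"
      using schur_intertwiner_invertible[OF irr irr intertwiner_minus_scalar[OF int]] by metis
    have "v = (S * ?T') *\<^sub>v v" using S v by simp
    also have "\<dots> = S *\<^sub>v (?T' *\<^sub>v v)"
      using T v by (intro assoc_mult_mat_vec[OF S(1)]) (auto simp: minus_carrier_mat)
    also have "\<dots> = 0\<^sub>v d" using S T'v by (intro eq_vecI) auto
    finally show False using v by simp
  qed
  have "T = c \<cdot>\<^sub>m 1\<^sub>m d"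
  proof (rule eq_matI)
    fix i j assume "i < dim_row (c \<cdot>\<^sub>m 1\<^sub>m d)" "j < dim_col (c \<cdot>\<^sub>m 1\<^sub>m d)"
    then have ij: "i < d" "j < d" by auto
    then have "?T' $$ (i,j) = 0" using \<open>?T' = 0\<^sub>m d d\<close> by simp
    then show "T $$ (i,j) = (c \<cdot>\<^sub>m 1\<^sub>m d) $$ (i,j)" using T ij by simp
  qed (use T in auto)
  then show ?thesis by (rule that)
qed

section \<open>Orthogonality of characters\<close>

definition averaged_mat ::
  "nat \<Rightarrow> nat \<Rightarrow> ((nat \<Rightarrow> nat) \<Rightarrow> nat \<Rightarrow> nat \<Rightarrow> complex) \<Rightarrow> nat \<Rightarrow> ((nat \<Rightarrow> nat) \<Rightarrow> nat \<Rightarrow> nat \<Rightarrow> complex) \<Rightarrow> complex mat \<Rightarrow> complex mat" where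
  "averaged_mat n d \<rho> e \<sigma> X = mat_sum e d (\<lambda>g. rep_mat \<sigma> e g * X * rep_mat \<rho> d (inv g)) (Sym n)"

lemma averaged_mat_intertwiner:
  assumes \<rho>: "is_rep n d \<rho>" and \<sigma>: "is_rep n e \<sigma>" and X: "X \<in> carrier_mat e d"
  shows "intertwiner n d \<rho> e \<sigma> (averaged_mat n d \<rho> e \<sigma> X)"
  unfolding intertwiner_def
proof (intro conjI ballI)
  show "averaged_mat n d \<rho> e \<sigma> X \<in> carrier_mat e d" by (simp add: averaged_mat_def)
  fix h assume h: "h \<in> Sym n"
  let ?F = "\<lambda>g. rep_mat \<sigma> e g * X * rep_mat \<rho> d (inv g)"
  have F: "?F g \<in> carrier_mat e d" for g
    using mult_carrier_mat[OF mult_carrier_mat[OF rep_mat_carrier X] rep_mat_carrier] .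
  have step: "rep_mat \<sigma> e h * ?F g = ?F (h \<circ> g) * rep_mat \<rho> d h" if g: "g \<in> Sym n" for g
  proof -
    have "rep_mat \<rho> d (inv g) = rep_mat \<rho> d (inv (h \<circ> g) \<circ> h)"
      using g h by (simp add: Sym_inv_comp_distrib o_assoc[symmetric] del: o_assoc)
    also have "\<dots> = rep_mat \<rho> d (inv (h \<circ> g)) * rep_mat \<rho> d h"
      using g h by (simp add: rep_mat_comp[OF \<rho>])
    finally have inv_g: "rep_mat \<rho> d (inv g) = rep_mat \<rho> d (inv (h \<circ> g)) * rep_mat \<rho> d h" .
    have RX: "rep_mat \<sigma> e g * X \<in> carrier_mat e d" for g
      using mult_carrier_mat[OF rep_mat_carrier X] .
    have "rep_mat \<sigma> e h * ?F g = (rep_mat \<sigma> e h * (rep_mat \<sigma> e g * X)) * rep_mat \<rho> d (inv g)"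
      by (rule assoc_mult_mat[symmetric, OF rep_mat_carrier RX rep_mat_carrier])
    also have "\<dots> = rep_mat \<sigma> e (h \<circ> g) * X * (rep_mat \<rho> d (inv (h \<circ> g)) * rep_mat \<rho> d h)"
      using g h by (simp add: assoc_mult_mat[symmetric, OF rep_mat_carrier rep_mat_carrier X] rep_mat_comp[OF \<sigma>] inv_g)
    also have "\<dots> = ?F (h \<circ> g) * rep_mat \<rho> d h"
      by (rule assoc_mult_mat[symmetric, OF RX rep_mat_carrier rep_mat_carrier])
    finally show ?thesis .
  qed
  have "rep_mat \<sigma> e h * averaged_mat n d \<rho> e \<sigma> X = mat_sum e d (\<lambda>g. rep_mat \<sigma> e h * ?F g) (Sym n)"
    unfolding averaged_mat_def using F by (intro mult_mat_sum[OF rep_mat_carrier])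
  also have "\<dots> = mat_sum e d (\<lambda>g. ?F (h \<circ> g) * rep_mat \<rho> d h) (Sym n)"
    by (rule mat_sum_cong) (rule step)
  also have "\<dots> = mat_sum e d (\<lambda>g. ?F g * rep_mat \<rho> d h) (Sym n)"
    by (rule mat_sum_reindex[OF bij_betw_Sym_left_mult[OF h]])
  also have "\<dots> = averaged_mat n d \<rho> e \<sigma> X * rep_mat \<rho> d h"
    unfolding averaged_mat_def using F by (intro mat_sum_mult[symmetric, OF rep_mat_carrier])
  finally show "rep_mat \<sigma> e h * averaged_mat n d \<rho> e \<sigma> X = averaged_mat n d \<rho> e \<sigma> X * rep_mat \<rho> d h" .
qed

lemma index_averaged_elementary_mat:
  assumes "i < e" "k < d" "j < e" "l < d"
  shows "averaged_mat n d \<rho> e \<sigma> (elementary_mat e d j l) $$ (i,k) = (\<Sum>g\<in>Sym n. \<sigma> g i j * \<rho> (inv g) l k)"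
  using assms
  by (simp add: averaged_mat_def index_mult_elementary_mat[OF rep_mat_carrier rep_mat_carrier] del: index_mult_mat)

lemma rep_entries_orthogonal:
  assumes irr: "is_irrep n d \<rho>" "is_irrep n e \<sigma>"
    and g0: "g0 \<in> Sym n" "mat_trace (rep_mat \<sigma> e g0) \<noteq> mat_trace (rep_mat \<rho> d g0)"
    and ijkl: "i < e" "j < e" "k < d" "l < d"
  shows "(\<Sum>g\<in>Sym n. \<sigma> g i j * \<rho> (inv g) l k) = 0"
proof -
  let ?A = "averaged_mat n d \<rho> e \<sigma> (elementary_mat e d j l)"
  have "intertwiner n d \<rho> e \<sigma> ?A"
    using irr by (intro averaged_mat_intertwiner) (auto simp: irrep_is_rep)
  then have "?A = 0\<^sub>m e d"
    using schur_trace_eq[OF irr] g0 by blast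
  then show ?thesis
    using ijkl index_averaged_elementary_mat[of i e k d j l n \<rho> \<sigma>] by simp
qed

lemma rep_entries_orthogonal_same:
  assumes irr: "is_irrep n d \<rho>" and ijkl: "i < d" "j < d" "k < d" "l < d"
  shows "(\<Sum>g\<in>Sym n. \<rho> g i j * \<rho> (inv g) l k) = (if i = k \<and> j = l then fact n / of_nat d else 0)"
proof -
  have \<rho>: "is_rep n d \<rho>" using irr by (rule irrep_is_rep)
  let ?E = "elementary_mat d d j l"
  let ?A = "averaged_mat n d \<rho> d \<rho> ?E"
  obtain c where c: "?A = c \<cdot>\<^sub>m 1\<^sub>m d"
    using schur_scalar[OF irr averaged_mat_intertwiner[OF \<rho> \<rho> elementary_mat_carrier]] .
  have "mat_trace ?A = (\<Sum>g\<in>Sym n. mat_trace (rep_mat \<rho> d g * ?E * rep_mat \<rho> d (inv g)))"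
    unfolding averaged_mat_def
    by (rule mat_trace_mat_sum, rule mult_carrier_mat[OF mult_carrier_mat[OF rep_mat_carrier elementary_mat_carrier] rep_mat_carrier])
  also have "\<dots> = (\<Sum>g\<in>Sym n. mat_trace ?E)"
    by (intro sum.cong refl mat_trace_conj) (simp_all add: rep_mat_inv_mult[OF \<rho>])
  finally have "c * of_nat d = fact n * (if j = l then 1 else 0)"
    using c ijkl by (simp add: mat_trace_elementary_mat card_Sym)
  then have "c = (if j = l then fact n / of_nat d else 0)"
    using irrep_dim_pos[OF irr] by (auto simp: field_simps)
  then show ?thesis
    using ijkl c index_averaged_elementary_mat[of i d k d j l n \<rho> \<rho>] by auto
qed

lemma rep_trace_product_sum:
  "(\<Sum>g\<in>Sym n. mat_trace (rep_mat \<sigma> e g) * mat_trace (rep_mat \<rho> d (inv g)))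
     = (\<Sum>i<e. \<Sum>k<d. \<Sum>g\<in>Sym n. \<sigma> g i i * \<rho> (inv g) k k)"
  by (simp add: mat_trace_rep_mat sum_product sum.swap[of _ "Sym n"])

lemma character_orthogonal:
  assumes irr: "is_irrep n d \<rho>" "is_irrep n e \<sigma>"
    and g0: "g0 \<in> Sym n" "mat_trace (rep_mat \<sigma> e g0) \<noteq> mat_trace (rep_mat \<rho> d g0)"
  shows "(\<Sum>g\<in>Sym n. mat_trace (rep_mat \<sigma> e g) * mat_trace (rep_mat \<rho> d (inv g))) = 0"
  by (simp add: rep_trace_product_sum rep_entries_orthogonal[OF irr g0])

lemma character_norm:
  assumes irr: "is_irrep n d \<rho>"
  shows "(\<Sum>g\<in>Sym n. mat_trace (rep_mat \<rho> d g) * mat_trace (rep_mat \<rho> d (inv g))) = fact n"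
proof -
  have "(\<Sum>g\<in>Sym n. mat_trace (rep_mat \<rho> d g) * mat_trace (rep_mat \<rho> d (inv g)))
      = (\<Sum>i<d. \<Sum>k<d. if i = k then fact n / of_nat d else 0)"
    by (simp add: rep_trace_product_sum rep_entries_orthogonal_same[OF irr])
  also have "\<dots> = fact n" using irrep_dim_pos[OF irr] by simp
  finally show ?thesis .
qed

text \<open>Averaging the standard Hermitian form over the group makes every \<open>\<rho> g\<close> unitary; this is
  what gives \<open>\<chi> (g\<inverse>) = cnj (\<chi> g)\<close>.\<close>
definition invariant_form :: "nat \<Rightarrow> nat \<Rightarrow> ((nat \<Rightarrow> nat) \<Rightarrow> nat \<Rightarrow> nat \<Rightarrow> complex) \<Rightarrow> complex mat" where
  "invariant_form n d \<rho> = mat_sum d d (\<lambda>g. mat_adjoint (rep_mat \<rho> d g) * rep_mat \<rho> d g) (Sym n)"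

lemma invariant_form_carrier [simp]: "invariant_form n d \<rho> \<in> carrier_mat d d"
  by (simp add: invariant_form_def)

lemma invariant_form_invariant:
  assumes \<rho>: "is_rep n d \<rho>" and h: "h \<in> Sym n"
  shows "mat_adjoint (rep_mat \<rho> d h) * invariant_form n d \<rho> * rep_mat \<rho> d h = invariant_form n d \<rho>"
proof -
  let ?R = "rep_mat \<rho> d" and ?F = "\<lambda>g. mat_adjoint (rep_mat \<rho> d g) * rep_mat \<rho> d g"
  have adjR: "mat_adjoint (?R g) \<in> carrier_mat d d" for g by simp
  have F: "?F g \<in> carrier_mat d d" for g using mult_carrier_mat[OF adjR rep_mat_carrier] .
  have step: "mat_adjoint (?R h) * ?F g * ?R h = ?F (g \<circ> h)" if g: "g \<in> Sym n" for g
  proof -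
    have "mat_adjoint (?R h) * ?F g * ?R h = mat_adjoint (?R h) * (?F g * ?R h)"
      by (rule assoc_mult_mat[OF adjR F rep_mat_carrier])
    also have "?F g * ?R h = mat_adjoint (?R g) * (?R g * ?R h)"
      by (rule assoc_mult_mat[OF adjR rep_mat_carrier rep_mat_carrier])
    also have "mat_adjoint (?R h) * (mat_adjoint (?R g) * (?R g * ?R h))
        = (mat_adjoint (?R h) * mat_adjoint (?R g)) * (?R g * ?R h)"
      by (rule assoc_mult_mat[symmetric, OF adjR adjR mult_carrier_mat[OF rep_mat_carrier rep_mat_carrier]])
    also have "\<dots> = ?F (g \<circ> h)"
      using g h by (simp add: mat_adjoint_mult[OF rep_mat_carrier rep_mat_carrier] rep_mat_comp[OF \<rho>])
    finally show ?thesis .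
  qed
  have "mat_adjoint (?R h) * invariant_form n d \<rho> * ?R h = mat_sum d d (\<lambda>g. mat_adjoint (?R h) * ?F g * ?R h) (Sym n)"
    unfolding invariant_form_def
    by (simp add: mult_mat_sum[OF adjR F] mat_sum_mult[OF rep_mat_carrier mult_carrier_mat[OF adjR F]])
  also have "\<dots> = mat_sum d d (\<lambda>g. ?F (g \<circ> h)) (Sym n)"
    by (rule mat_sum_cong) (rule step)
  also have "\<dots> = invariant_form n d \<rho>"
    unfolding invariant_form_def by (rule mat_sum_reindex[OF bij_betw_Sym_right_mult[OF h]])
  finally show ?thesis .
qed

lemma invariant_form_cscalar_prod:
  assumes v: "v \<in> carrier_vec d"
  shows "(invariant_form n d \<rho> *\<^sub>v v) \<bullet>c v = (\<Sum>g\<in>Sym n. (rep_mat \<rho> d g *\<^sub>v v) \<bullet>c (rep_mat \<rho> d g *\<^sub>v v))"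
proof -
  let ?R = "rep_mat \<rho> d" and ?F = "\<lambda>g. mat_adjoint (rep_mat \<rho> d g) * rep_mat \<rho> d g"
  have adjR: "mat_adjoint (?R g) \<in> carrier_mat d d" for g by simp
  have F: "?F g \<in> carrier_mat d d" for g using mult_carrier_mat[OF adjR rep_mat_carrier] .
  have "(invariant_form n d \<rho> *\<^sub>v v) \<bullet>c v = (\<Sum>i<d. (invariant_form n d \<rho> *\<^sub>v v) $ i * cnj (v $ i))"
    by (rule cscalar_prod_sum[OF mult_mat_vec_carrier[OF invariant_form_carrier v] v])
  also have "\<dots> = (\<Sum>i<d. \<Sum>g\<in>Sym n. (?F g *\<^sub>v v) $ i * cnj (v $ i))"
    unfolding invariant_form_def
    by (intro sum.cong refl) (simp add: index_mat_sum_mult_mat_vec[OF F v] sum_distrib_right del: index_mult_mat_vec)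
  also have "\<dots> = (\<Sum>g\<in>Sym n. \<Sum>i<d. (?F g *\<^sub>v v) $ i * cnj (v $ i))" by (rule sum.swap)
  also have "\<dots> = (\<Sum>g\<in>Sym n. (?F g *\<^sub>v v) \<bullet>c v)"
    by (intro sum.cong refl cscalar_prod_sum[OF mult_mat_vec_carrier[OF F v] v, symmetric])
  also have "\<dots> = (\<Sum>g\<in>Sym n. (?R g *\<^sub>v v) \<bullet>c (?R g *\<^sub>v v))"
  proof (rule sum.cong[OF refl])
    fix g
    have "?F g *\<^sub>v v = mat_adjoint (?R g) *\<^sub>v (?R g *\<^sub>v v)"
      by (rule assoc_mult_mat_vec[OF adjR rep_mat_carrier v])
    then show "(?F g *\<^sub>v v) \<bullet>c v = (?R g *\<^sub>v v) \<bullet>c (?R g *\<^sub>v v)"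
      using mat_adjoint_cscalar_prod[OF rep_mat_carrier v mult_mat_vec_carrier[OF rep_mat_carrier v]] by simp
  qed
  finally show ?thesis .
qed

lemma invariant_form_kernel:
  assumes \<rho>: "is_rep n d \<rho>" and v: "v \<in> carrier_vec d" and Pv: "invariant_form n d \<rho> *\<^sub>v v = 0\<^sub>v d"
  shows "v = 0\<^sub>v d"
proof -
  let ?f = "\<lambda>g. (rep_mat \<rho> d g *\<^sub>v v) \<bullet>c (rep_mat \<rho> d g *\<^sub>v v)"
  have "(\<Sum>g\<in>Sym n. ?f g) = 0"
    using v Pv by (simp flip: invariant_form_cscalar_prod[OF v])
  moreover have "(\<Sum>g\<in>Sym n. ?f g) = 0 \<longleftrightarrow> (\<forall>g\<in>Sym n. ?f g = 0)"
    by (rule sum_nonneg_eq_0_iff) auto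
  ultimately have "?f id = 0" by simp
  then show ?thesis using v by (simp add: rep_mat_id[OF \<rho>])
qed

lemma rep_mat_inv_trace_eq_cnj:
  assumes \<rho>: "is_rep n d \<rho>" and h: "h \<in> Sym n"
  shows "mat_trace (rep_mat \<rho> d (inv h)) = cnj (mat_trace (rep_mat \<rho> d h))"
proof -
  let ?P = "invariant_form n d \<rho>" and ?R = "rep_mat \<rho> d"
  have "det ?P \<noteq> 0"
    using det_0_iff_vec_prod_zero[OF invariant_form_carrier] invariant_form_kernel[OF \<rho>] by blast
  then have "?P \<in> Units (ring_mat TYPE(complex) d ())" by (rule det_non_zero_imp_unit[OF invariant_form_carrier])
  then obtain B where B: "B \<in> carrier_mat d d" "B * ?P = 1\<^sub>m d" "?P * B = 1\<^sub>m d"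
    unfolding Units_def ring_mat_def by auto
  have adjR: "mat_adjoint (?R h) \<in> carrier_mat d d" by simp
  have adjP: "mat_adjoint (?R h) * ?P \<in> carrier_mat d d" using mult_carrier_mat[OF adjR invariant_form_carrier] .
  have "mat_adjoint (?R h) * ?P = (mat_adjoint (?R h) * ?P * ?R h) * ?R (inv h)"
    using rep_mat_mult_inv[OF \<rho> h] by (simp add: assoc_mult_mat[OF adjP rep_mat_carrier rep_mat_carrier] right_mult_one_mat[OF adjP])
  also have "\<dots> = ?P * ?R (inv h)" by (simp add: invariant_form_invariant[OF \<rho> h])
  finally have "mat_adjoint (?R h) * ?P * B = ?P * ?R (inv h) * B" by simp
  then have "mat_adjoint (?R h) = ?P * ?R (inv h) * B"
    using B by (simp add: assoc_mult_mat[OF adjR invariant_form_carrier B(1)])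
  then have "mat_trace (mat_adjoint (?R h)) = mat_trace (?P * ?R (inv h) * B)" by simp
  also have "\<dots> = mat_trace (?R (inv h))" using B by (intro mat_trace_conj) simp_all
  finally show ?thesis by (simp add: mat_trace_adjoint[OF rep_mat_carrier])
qed

lemma IrrE:
  assumes "ch \<in> Irr n"
  obtains d \<rho> where "is_irrep n d \<rho>" "ch = character n d \<rho>"
  using assms unfolding Irr_def by blast

lemma Irr_orthonormal:
  assumes "ch \<in> Irr n" "ps \<in> Irr n"
  shows "(\<Sum>g\<in>Sym n. ch g * cnj (ps g)) = (if ch = ps then fact n else 0)"
proof -
  obtain d \<rho> where \<rho>: "is_irrep n d \<rho>" and ch: "ch = character n d \<rho>" using assms(1) by (rule IrrE)
  obtain e \<sigma> where \<sigma>: "is_irrep n e \<sigma>" and ps: "ps = character n e \<sigma>" using assms(2) by (rule IrrE)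
  have "(\<Sum>g\<in>Sym n. ch g * cnj (ps g)) = (\<Sum>g\<in>Sym n. mat_trace (rep_mat \<rho> d g) * mat_trace (rep_mat \<sigma> e (inv g)))"
    by (intro sum.cong refl)
      (simp add: ch ps character_eq_mat_trace rep_mat_inv_trace_eq_cnj[OF irrep_is_rep[OF \<sigma>]])
  also have "\<dots> = (if ch = ps then fact n else 0)"
  proof (cases "ch = ps")
    case True
    then have "mat_trace (rep_mat \<sigma> e g) = mat_trace (rep_mat \<rho> d g)" if "g \<in> Sym n" for g
      using that fun_cong[OF True[unfolded ch ps], of g] by (simp add: character_eq_mat_trace)
    then have "(\<Sum>g\<in>Sym n. mat_trace (rep_mat \<rho> d g) * mat_trace (rep_mat \<sigma> e (inv g)))
        = (\<Sum>g\<in>Sym n. mat_trace (rep_mat \<rho> d g) * mat_trace (rep_mat \<rho> d (inv g)))"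
      by (intro sum.cong refl) simp
    with True show ?thesis by (simp add: character_norm[OF \<rho>])
  next
    case False
    then obtain g0 where "character n d \<rho> g0 \<noteq> character n e \<sigma> g0" by (auto simp: ch ps)
    then have "g0 \<in> Sym n" "mat_trace (rep_mat \<rho> d g0) \<noteq> mat_trace (rep_mat \<sigma> e g0)"
      by (auto simp: character_def mat_trace_rep_mat split: if_splits)
    with False show ?thesis by (simp add: character_orthogonal[OF \<sigma> \<rho>])
  qed
  finally show ?thesis .
qed

lemma Irr_conj_invariant:
  assumes "ch \<in> Irr n" "s \<in> Sym n" "g \<in> Sym n"
  shows "ch (s \<circ> g \<circ> inv s) = ch g"
proof -
  obtain d \<rho> where \<rho>: "is_irrep n d \<rho>" and ch: "ch = character n d \<rho>" using assms(1) by (rule IrrE)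
  have r: "is_rep n d \<rho>" using \<rho> by (rule irrep_is_rep)
  have "rep_mat \<rho> d (s \<circ> g \<circ> inv s) = rep_mat \<rho> d s * rep_mat \<rho> d g * rep_mat \<rho> d (inv s)"
    using assms by (simp add: rep_mat_comp[OF r])
  then show ?thesis
    using assms mat_trace_conj[OF rep_mat_carrier rep_mat_carrier rep_mat_carrier rep_mat_inv_mult[OF r assms(2)]]
    by (simp add: ch character_eq_mat_trace)
qed

lemma Irr_id_eq_of_nat:
  assumes "ch \<in> Irr n"
  obtains d where "ch id = of_nat d"
proof -
  obtain d \<rho> where \<rho>: "is_irrep n d \<rho>" and ch: "ch = character n d \<rho>" using assms by (rule IrrE)
  have "ch id = of_nat d" using rep_mat_id[OF irrep_is_rep[OF \<rho>]] by (simp add: ch character_eq_mat_trace)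
  then show ?thesis by (rule that)
qed

section \<open>Weak Fourier sampling and conjugation probabilities\<close>

lemma sum_mult_cnj_expansion:
  fixes q :: "'a \<Rightarrow> complex"
  shows "(\<Sum>x\<in>A. q x * cnj ((\<Sum>\<phi>\<in>F. a \<phi> * \<phi> x) / of_real N))
    = (\<Sum>\<phi>\<in>F. cnj (a \<phi>) * (\<Sum>x\<in>A. q x * cnj (\<phi> x))) / of_real N"
  by (simp add: sum_distrib_left sum_divide_distrib sum.swap[of _ F] mult_ac)

lemma bessel_projection:
  fixes F :: "('a \<Rightarrow> complex) set" and f :: "'a \<Rightarrow> complex"
  assumes F: "finite F" and N: "N > 0"
    and orth: "\<And>\<phi> \<psi>. \<phi> \<in> F \<Longrightarrow> \<psi> \<in> F \<Longrightarrow> (\<Sum>x\<in>A. \<phi> x * cnj (\<psi> x)) = (if \<phi> = \<psi> then of_real N else 0)"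
    and c: "\<And>\<phi>. c \<phi> = (\<Sum>x\<in>A. f x * cnj (\<phi> x))"
    and p: "\<And>x. p x = (\<Sum>\<phi>\<in>F. c \<phi> * \<phi> x) / of_real N"
  shows "(\<Sum>x\<in>A. f x * cnj (p x)) = of_real ((\<Sum>\<phi>\<in>F. (cmod (c \<phi>))\<^sup>2) / N)"
    and "(\<Sum>x\<in>A. p x * cnj (p x)) = of_real ((\<Sum>\<phi>\<in>F. (cmod (c \<phi>))\<^sup>2) / N)"
proof -
  have CC: "(\<Sum>\<phi>\<in>F. cnj (c \<phi>) * c \<phi>) = of_real (\<Sum>\<phi>\<in>F. (cmod (c \<phi>))\<^sup>2)"
    unfolding of_real_sum by (intro sum.cong refl) (subst complex_norm_square, rule mult.commute)
  show "(\<Sum>x\<in>A. f x * cnj (p x)) = of_real ((\<Sum>\<phi>\<in>F. (cmod (c \<phi>))\<^sup>2) / N)"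
    unfolding p sum_mult_cnj_expansion using CC by (simp add: c[symmetric])
  have p_coeff: "(\<Sum>x\<in>A. \<phi> x * cnj (p x)) = cnj (c \<phi>)" if "\<phi> \<in> F" for \<phi>
  proof -
    have "(\<Sum>x\<in>A. \<phi> x * cnj (p x)) = (\<Sum>\<psi>\<in>F. cnj (c \<psi>) * (if \<phi> = \<psi> then of_real N else 0)) / of_real N"
      unfolding p sum_mult_cnj_expansion using orth[OF that] by simp
    also have "\<dots> = cnj (c \<phi>)" using that F N by (simp add: if_distrib[of "\<lambda>x. _ * x"] sum.delta cong: if_cong)
    finally show ?thesis .
  qed
  have "(\<Sum>x\<in>A. p x * cnj (p x)) = (\<Sum>x\<in>A. \<Sum>\<phi>\<in>F. c \<phi> * (\<phi> x * cnj (p x)) / of_real N)"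
    by (simp add: p[of x for x] sum_divide_distrib sum_distrib_right mult_ac)
  also have "\<dots> = (\<Sum>\<phi>\<in>F. c \<phi> * (\<Sum>x\<in>A. \<phi> x * cnj (p x)) / of_real N)"
    by (subst sum.swap) (simp add: sum_divide_distrib sum_distrib_left)
  also have "\<dots> = (\<Sum>\<phi>\<in>F. cnj (c \<phi>) * c \<phi>) / of_real N"
    by (simp add: p_coeff sum_divide_distrib mult.commute)
  finally show "(\<Sum>x\<in>A. p x * cnj (p x)) = of_real ((\<Sum>\<phi>\<in>F. (cmod (c \<phi>))\<^sup>2) / N)"
    using CC by simp
qed

lemma bessel_inequality:
  fixes F :: "('a \<Rightarrow> complex) set" and f :: "'a \<Rightarrow> complex"
  assumes N: "N > 0"
    and orth: "\<And>\<phi> \<psi>. \<phi> \<in> F \<Longrightarrow> \<psi> \<in> F \<Longrightarrow> (\<Sum>x\<in>A. \<phi> x * cnj (\<psi> x)) = (if \<phi> = \<psi> then of_real N else 0)"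
  shows "(\<Sum>\<phi>\<in>F. (cmod (\<Sum>x\<in>A. f x * cnj (\<phi> x)))\<^sup>2) \<le> N * (\<Sum>x\<in>A. (cmod (f x))\<^sup>2)"
proof (cases "finite F")
  case False
  then show ?thesis using N by (simp add: sum_nonneg)
next
  case F: True
  define c where "c \<phi> = (\<Sum>x\<in>A. f x * cnj (\<phi> x))" for \<phi>
  define p where "p x = (\<Sum>\<phi>\<in>F. c \<phi> * \<phi> x) / of_real N" for x
  define C where "C = (\<Sum>\<phi>\<in>F. (cmod (c \<phi>))\<^sup>2)"
  note proj = bessel_projection[OF F N orth c_def p_def, folded C_def]
  have "of_real (\<Sum>x\<in>A. (cmod (f x - p x))\<^sup>2) = (\<Sum>x\<in>A. (f x - p x) * cnj (f x - p x))"
    unfolding of_real_sum by (intro sum.cong refl) (rule complex_norm_square)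
  also have "\<dots> = (\<Sum>x\<in>A. f x * cnj (f x)) - (\<Sum>x\<in>A. f x * cnj (p x)) - cnj (\<Sum>x\<in>A. f x * cnj (p x))
      + (\<Sum>x\<in>A. p x * cnj (p x))"
    by (simp add: algebra_simps sum.distrib sum_subtractf)
  also have "(\<Sum>x\<in>A. f x * cnj (f x)) = of_real (\<Sum>x\<in>A. (cmod (f x))\<^sup>2)"
    unfolding of_real_sum by (intro sum.cong refl) (rule complex_norm_square[symmetric])
  also have "of_real (\<Sum>x\<in>A. (cmod (f x))\<^sup>2) - (\<Sum>x\<in>A. f x * cnj (p x)) - cnj (\<Sum>x\<in>A. f x * cnj (p x))
      + (\<Sum>x\<in>A. p x * cnj (p x)) = (of_real ((\<Sum>x\<in>A. (cmod (f x))\<^sup>2) - C / N) :: complex)"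
    by (simp add: proj)
  finally have "(\<Sum>x\<in>A. (cmod (f x - p x))\<^sup>2) = (\<Sum>x\<in>A. (cmod (f x))\<^sup>2) - C / N"
    using of_real_eq_iff by blast
  moreover have "0 \<le> (\<Sum>x\<in>A. (cmod (f x - p x))\<^sup>2)" by (intro sum_nonneg) simp
  ultimately have "C / N \<le> (\<Sum>x\<in>A. (cmod (f x))\<^sup>2)" by simp
  then show ?thesis using N by (simp add: C_def c_def field_simps)
qed

definition conj_prob :: "nat \<Rightarrow> (nat \<Rightarrow> nat) set \<Rightarrow> (nat \<Rightarrow> nat) \<Rightarrow> real" where
  "conj_prob n H g = real (card {s \<in> Sym n. s \<circ> g \<circ> inv s \<in> H}) / fact n"

lemma conj_prob_conj_invariant:
  assumes t: "t \<in> Sym n"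
  shows "conj_prob n H (t \<circ> g \<circ> inv t) = conj_prob n H g"
proof -
  have "bij_betw (\<lambda>s. s \<circ> t) {s \<in> Sym n. s \<circ> (t \<circ> g \<circ> inv t) \<circ> inv s \<in> H} {s \<in> Sym n. s \<circ> g \<circ> inv s \<in> H}"
  proof (rule bij_betw_byWitness[of _ "\<lambda>s. s \<circ> inv t"])
    have "(s \<circ> t) \<circ> g \<circ> inv (s \<circ> t) = s \<circ> (t \<circ> g \<circ> inv t) \<circ> inv s" if "s \<in> Sym n" for s
      using that t by (simp add: Sym_inv_comp_distrib fun_eq_iff)
    then show "(\<lambda>s. s \<circ> t) ` {s \<in> Sym n. s \<circ> (t \<circ> g \<circ> inv t) \<circ> inv s \<in> H} \<subseteq> {s \<in> Sym n. s \<circ> g \<circ> inv s \<in> H}"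
      using t by auto
    have "(s \<circ> inv t) \<circ> (t \<circ> g \<circ> inv t) \<circ> inv (s \<circ> inv t) = s \<circ> g \<circ> inv s" if "s \<in> Sym n" for s
      using that t by (simp add: Sym_inv_comp_distrib fun_eq_iff)
    then show "(\<lambda>s. s \<circ> inv t) ` {s \<in> Sym n. s \<circ> g \<circ> inv s \<in> H} \<subseteq> {s \<in> Sym n. s \<circ> (t \<circ> g \<circ> inv t) \<circ> inv s \<in> H}"
      using t by auto
  qed (use t in \<open>auto simp: fun_eq_iff\<close>)
  then show ?thesis unfolding conj_prob_def by (simp add: bij_betw_same_card)
qed

lemma sum_card_conj_mult:
  fixes \<phi> :: "(nat \<Rightarrow> nat) \<Rightarrow> 'b::{comm_ring_1, semiring_char_0}"
  assumes H: "H \<subseteq> Sym n"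
    and \<phi>: "\<And>t g. t \<in> Sym n \<Longrightarrow> g \<in> Sym n \<Longrightarrow> \<phi> (t \<circ> g \<circ> inv t) = \<phi> g"
  shows "(\<Sum>g\<in>Sym n. of_nat (card {s \<in> Sym n. s \<circ> g \<circ> inv s \<in> H}) * \<phi> g) = fact n * (\<Sum>h\<in>H. \<phi> h)"
proof -
  have "(\<Sum>g\<in>Sym n. of_nat (card {s \<in> Sym n. s \<circ> g \<circ> inv s \<in> H}) * \<phi> g)
      = (\<Sum>s\<in>Sym n. \<Sum>g\<in>Sym n. if s \<circ> g \<circ> inv s \<in> H then \<phi> g else 0)"
    by (subst sum.swap) (simp add: sum.If_cases Int_def sum_distrib_right)
  also have "\<dots> = (\<Sum>s\<in>Sym n. \<Sum>h\<in>H. \<phi> h)"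
  proof (rule sum.cong[OF refl])
    fix s assume s: "s \<in> Sym n"
    have "(\<Sum>g\<in>Sym n. if s \<circ> g \<circ> inv s \<in> H then \<phi> g else 0)
        = (\<Sum>g\<in>Sym n. if s \<circ> (inv s \<circ> g \<circ> s) \<circ> inv s \<in> H then \<phi> (inv s \<circ> g \<circ> s) else 0)"
      by (rule sum.reindex_bij_betw[OF bij_betw_Sym_conj[OF s], symmetric])
    also have "\<dots> = (\<Sum>g\<in>Sym n. if g \<in> H then \<phi> g else 0)"
    proof (rule sum.cong[OF refl])
      fix g assume g: "g \<in> Sym n"
      have "s \<circ> (inv s \<circ> g \<circ> s) \<circ> inv s = g" using s by (simp add: fun_eq_iff)
      moreover have "\<phi> (inv s \<circ> g \<circ> s) = \<phi> g" using \<phi>[OF inv_in_Sym[OF s] g] s by simp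
      ultimately show "(if s \<circ> (inv s \<circ> g \<circ> s) \<circ> inv s \<in> H then \<phi> (inv s \<circ> g \<circ> s) else 0)
          = (if g \<in> H then \<phi> g else 0)" by simp
    qed
    also have "\<dots> = (\<Sum>h\<in>H. \<phi> h)"
      using H by (simp add: sum.If_cases Int_absorb1)
    finally show "(\<Sum>g\<in>Sym n. if s \<circ> g \<circ> inv s \<in> H then \<phi> g else 0) = (\<Sum>h\<in>H. \<phi> h)" .
  qed
  also have "\<dots> = fact n * (\<Sum>h\<in>H. \<phi> h)" by (simp add: card_Sym)
  finally show ?thesis .
qed

lemma sum_conj_prob_square:
  assumes "H \<subseteq> Sym n"
  shows "(\<Sum>g\<in>Sym n. (conj_prob n H g)\<^sup>2) = (\<Sum>h\<in>H. conj_prob n H h)"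
proof -
  have "(\<Sum>g\<in>Sym n. of_nat (card {s \<in> Sym n. s \<circ> g \<circ> inv s \<in> H}) * conj_prob n H g)
      = fact n * (\<Sum>h\<in>H. conj_prob n H h)"
    using assms conj_prob_conj_invariant by (rule sum_card_conj_mult)
  then show ?thesis
    by (simp add: conj_prob_def power2_eq_square sum_divide_distrib[symmetric] field_simps)
qed

lemma sum_conj_prob_Irr:
  assumes "H \<subseteq> Sym n" "ch \<in> Irr n"
  shows "(\<Sum>g\<in>Sym n. of_real (conj_prob n H g) * ch g) = (\<Sum>h\<in>H. ch h)"
proof -
  have "(\<Sum>g\<in>Sym n. of_nat (card {s \<in> Sym n. s \<circ> g \<circ> inv s \<in> H}) * ch g) = fact n * (\<Sum>h\<in>H. ch h)"
    using assms(1) Irr_conj_invariant[OF assms(2)] by (rule sum_card_conj_mult)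
  then show ?thesis
    by (simp add: conj_prob_def sum_divide_distrib[symmetric] field_simps)
qed

lemma sum_Irr_degree_square_le: "(\<Sum>ch\<in>Irr n. (Re (ch id))\<^sup>2) \<le> fact n"
proof -
  let ?\<delta> = "\<lambda>g::nat \<Rightarrow> nat. if g = id then (1::complex) else 0"
  have "(\<Sum>ch\<in>Irr n. (cmod (\<Sum>g\<in>Sym n. ?\<delta> g * cnj (ch g)))\<^sup>2) \<le> fact n * (\<Sum>g\<in>Sym n. (cmod (?\<delta> g))\<^sup>2)"
    by (rule bessel_inequality) (simp_all add: Irr_orthonormal)
  moreover have "(cmod (\<Sum>g\<in>Sym n. ?\<delta> g * cnj (ch g)))\<^sup>2 = (Re (ch id))\<^sup>2" if ch: "ch \<in> Irr n" for ch
  proof -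
    obtain d where d: "ch id = of_nat d" using Irr_id_eq_of_nat[OF ch] .
    have "(\<Sum>g\<in>Sym n. ?\<delta> g * cnj (ch g)) = (\<Sum>g\<in>Sym n. if g = id then cnj (ch id) else 0)"
      by (intro sum.cong) auto
    then show ?thesis using d by simp
  qed
  moreover have "(\<Sum>g\<in>Sym n. (cmod (?\<delta> g))\<^sup>2) = (\<Sum>g\<in>Sym n. if g = id then 1 else 0)"
    by (intro sum.cong) auto
  then have "(\<Sum>g\<in>Sym n. (cmod (?\<delta> g))\<^sup>2) = 1" by simp
  ultimately show ?thesis by simp
qed

lemma sum_Irr_character_sum_square_le:
  assumes "H \<subseteq> Sym n"
  shows "(\<Sum>ch\<in>Irr n. (cmod (\<Sum>h\<in>H. ch h))\<^sup>2) \<le> fact n * (\<Sum>h\<in>H. conj_prob n H h)"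
proof -
  let ?f = "\<lambda>g. complex_of_real (conj_prob n H g)"
  have "(\<Sum>ch\<in>Irr n. (cmod (\<Sum>g\<in>Sym n. ?f g * cnj (ch g)))\<^sup>2) \<le> fact n * (\<Sum>g\<in>Sym n. (cmod (?f g))\<^sup>2)"
    by (rule bessel_inequality) (simp_all add: Irr_orthonormal)
  moreover have "cmod (\<Sum>g\<in>Sym n. ?f g * cnj (ch g)) = cmod (\<Sum>h\<in>H. ch h)" if "ch \<in> Irr n" for ch
  proof -
    have "(\<Sum>g\<in>Sym n. ?f g * cnj (ch g)) = cnj (\<Sum>g\<in>Sym n. ?f g * ch g)" by simp
    then show ?thesis using sum_conj_prob_Irr[OF assms that] by (metis complex_mod_cnj)
  qed
  moreover have "(\<Sum>g\<in>Sym n. (cmod (?f g))\<^sup>2) = (\<Sum>h\<in>H. conj_prob n H h)"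
    using sum_conj_prob_square[OF assms] by simp
  ultimately show ?thesis by simp
qed

text \<open>The Fourier coefficients of the class function \<open>conj_prob n H\<close> are the character sums over
  \<open>H\<close>, so Bessel's inequality and Cauchy--Schwarz over \<^const>\<open>Irr\<close> bound \<^const>\<open>D_H\<close>.\<close>
lemma D_H_le_sqrt_sum_conj_prob:
  assumes "H \<subseteq> Sym n"
  shows "D_H n H \<le> sqrt (\<Sum>h\<in>H - {id}. conj_prob n (H - {id}) h)"
proof -
  let ?H = "H - {id}" and ?N = "fact n :: real"
  let ?S = "\<Sum>h\<in>?H. conj_prob n ?H h"
  have H: "?H \<subseteq> Sym n" using assms by blast
  have "(\<Sum>ch\<in>Irr n. Re (ch id) * cmod (\<Sum>h\<in>?H. ch h))\<^sup>2
      \<le> (\<Sum>ch\<in>Irr n. (Re (ch id))\<^sup>2) * (\<Sum>ch\<in>Irr n. (cmod (\<Sum>h\<in>?H. ch h))\<^sup>2)"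
    by (rule Cauchy_Schwarz_ineq_sum)
  also have "\<dots> \<le> ?N * (?N * ?S)"
    by (intro mult_mono sum_Irr_degree_square_le sum_Irr_character_sum_square_le[OF H]) (auto intro: sum_nonneg)
  finally have "(\<Sum>ch\<in>Irr n. Re (ch id) * cmod (\<Sum>h\<in>?H. ch h)) \<le> sqrt (?N * (?N * ?S))"
    by (rule real_le_rsqrt)
  also have "\<dots> = ?N * sqrt ?S" by (simp add: real_sqrt_mult)
  finally have "(\<Sum>ch\<in>Irr n. Re (ch id) * cmod (\<Sum>h\<in>?H. ch h)) \<le> ?N * sqrt ?S" .
  then show ?thesis
    unfolding D_H_def by (simp add: card_Sym field_simps)
qed

section \<open>Centralizers\<close>

lemma card_conj_eq_le_centralizer:
  assumes h: "h \<in> Sym n"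
  shows "card {s \<in> Sym n. s \<circ> h \<circ> inv s = h'} \<le> card {t \<in> Sym n. t \<circ> h = h \<circ> t}"
proof (cases "{s \<in> Sym n. s \<circ> h \<circ> inv s = h'} = {}")
  case False
  then obtain s0 where s0: "s0 \<in> Sym n" "s0 \<circ> h \<circ> inv s0 = h'" by auto
  show ?thesis
  proof (rule card_inj_on_le[of "\<lambda>s. inv s0 \<circ> s"])
    show "inj_on (\<lambda>s. inv s0 \<circ> s) {s \<in> Sym n. s \<circ> h \<circ> inv s = h'}"
    proof (rule inj_onI)
      fix s1 s2 assume "inv s0 \<circ> s1 = inv s0 \<circ> s2"
      then have "s0 \<circ> (inv s0 \<circ> s1) = s0 \<circ> (inv s0 \<circ> s2)" by simp
      then show "s1 = s2" using s0(1) by (simp add: o_assoc)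
    qed
    have "inv s0 \<circ> s \<circ> h = h \<circ> (inv s0 \<circ> s)" if "s \<in> Sym n" "s \<circ> h \<circ> inv s = h'" for s
    proof
      fix x
      have "s (h x) = h' (s x)" using fun_cong[OF that(2), of "s x"] that(1) by simp
      also have "h' (s x) = s0 (h (inv s0 (s x)))" using fun_cong[OF s0(2), of "s x"] by simp
      finally show "(inv s0 \<circ> s \<circ> h) x = (h \<circ> (inv s0 \<circ> s)) x" using s0(1) by simp
    qed
    then show "(\<lambda>s. inv s0 \<circ> s) ` {s \<in> Sym n. s \<circ> h \<circ> inv s = h'} \<subseteq> {t \<in> Sym n. t \<circ> h = h \<circ> t}"
      using s0(1) by auto
  qed simp
next
  case True
  show ?thesis unfolding True by simp
qed

lemma commute_funpow_apply: "t \<circ> h = h \<circ> t \<Longrightarrow> t ((h ^^ j) y) = (h ^^ j) (t y)"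
proof (induction j)
  case (Suc j)
  then show ?case using fun_cong[OF Suc.prems, of "(h ^^ j) y"] by simp
qed simp

lemma commuting_perm_maps_moved:
  assumes "t \<circ> h = h \<circ> t" "inj t" "h y \<noteq> y"
  shows "h (t y) \<noteq> t y"
proof
  assume "h (t y) = t y"
  then have "t (h y) = t y" using fun_cong[OF assms(1), of y] by simp
  then show False using assms(2,3) by (auto dest: injD)
qed

lemma commuting_perm_restrict_permutes:
  assumes t: "t \<in> Sym n" and com: "t \<circ> h = h \<circ> t"
  defines "F \<equiv> {1..n} - {x. h x \<noteq> x}"
  shows "(\<lambda>x. if x \<in> F then t x else x) permutes F"
proof -
  let ?p = "\<lambda>x. if x \<in> F then t x else x"
  have "t x \<in> F" if "x \<in> F" for x
    using that permutes_in_image[OF Sym_permutes[OF t]] fun_cong[OF com, of x] by (auto simp: F_def)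
  then have "?p ` F \<subseteq> F" by auto
  moreover have "inj_on ?p F" using bij_is_inj[OF Sym_bij[OF t]] by (auto simp: inj_on_def dest: injD)
  ultimately have "bij_betw ?p F F" using endo_inj_surj[of F ?p] by (simp add: F_def bij_betw_def)
  then show ?thesis by (rule bij_imp_permutes) simp
qed

lemma commuting_perm_eqI:
  assumes t1: "t1 \<in> Sym n" "t1 \<circ> h = h \<circ> t1" and t2: "t2 \<in> Sym n" "t2 \<circ> h = h \<circ> t2"
    and reps: "\<And>x. h x \<noteq> x \<Longrightarrow> \<exists>r\<in>R. \<exists>j. x = (h ^^ j) r"
    and fixed: "\<And>x. x \<in> {1..n} \<Longrightarrow> h x = x \<Longrightarrow> t1 x = t2 x"
    and on_R: "\<And>r. r \<in> R \<Longrightarrow> t1 r = t2 r"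
  shows "t1 = t2"
proof
  fix x show "t1 x = t2 x"
  proof (cases "x \<in> {1..n}")
    case False
    then show ?thesis using permutes_not_in[OF Sym_permutes[OF t1(1)]] permutes_not_in[OF Sym_permutes[OF t2(1)]]
      by simp
  next
    case True
    show ?thesis
    proof (cases "h x = x")
      case False
      then obtain r j where "r \<in> R" "x = (h ^^ j) r" using reps by blast
      then show ?thesis using on_R commute_funpow_apply[OF t1(2)] commute_funpow_apply[OF t2(2)] by simp
    qed (use True fixed in simp)
  qed
qed

text \<open>A permutation commuting with \<open>h\<close> is determined by the permutation it induces on the fixed
  points of \<open>h\<close> and by its values at one point of each cycle of \<open>h\<close>.\<close>
lemma card_centralizer_le_reps:
  assumes h: "h \<in> Sym n" and R: "R \<subseteq> {x. h x \<noteq> x}"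
    and reps: "\<And>x. h x \<noteq> x \<Longrightarrow> \<exists>r\<in>R. \<exists>j. x = (h ^^ j) r"
  shows "card {t \<in> Sym n. t \<circ> h = h \<circ> t} \<le> fact (n - supp h) * supp h ^ card R"
proof -
  let ?M = "{x. h x \<noteq> x}" and ?k = "supp h"
  have finM: "finite ?M" using Sym_moved_subset[OF h] finite_subset by blast
  have finR: "finite R" using R finM finite_subset by blast
  define F where "F = {1..n} - ?M"
  have cardF: "card F = n - ?k"
    unfolding F_def supp_def using card_Diff_subset[OF finM Sym_moved_subset[OF h]] by simp
  have finF: "finite F" by (simp add: F_def)
  define C where "C = {t \<in> Sym n. t \<circ> h = h \<circ> t}"
  define T where "T = {p. p permutes F} \<times> (R \<rightarrow>\<^sub>E ?M)"
  define \<Phi> where "\<Phi> t = ((\<lambda>x. if x \<in> F then t x else x), restrict t R)" for t :: "nat \<Rightarrow> nat"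
  have "\<Phi> ` C \<subseteq> T"
  proof
    fix z assume "z \<in> \<Phi> ` C"
    then obtain t where t: "t \<in> Sym n" "t \<circ> h = h \<circ> t" and z: "z = \<Phi> t" by (auto simp: C_def)
    have "(\<lambda>x. if x \<in> F then t x else x) permutes F"
      unfolding F_def by (rule commuting_perm_restrict_permutes[OF t])
    moreover have "restrict t R \<in> R \<rightarrow>\<^sub>E ?M"
      using R commuting_perm_maps_moved[OF t(2) bij_is_inj[OF Sym_bij[OF t(1)]]] by auto
    ultimately show "z \<in> T" by (simp add: z \<Phi>_def T_def)
  qed
  moreover have "inj_on \<Phi> C"
  proof (rule inj_onI)
    fix t1 t2 assume "t1 \<in> C" "t2 \<in> C" and eq: "\<Phi> t1 = \<Phi> t2"
    then have t1: "t1 \<in> Sym n" "t1 \<circ> h = h \<circ> t1" and t2: "t2 \<in> Sym n" "t2 \<circ> h = h \<circ> t2"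
      by (simp_all add: C_def)
    have on_F: "t1 x = t2 x" if "x \<in> F" for x
      using fun_cong[OF arg_cong[OF eq, of fst], of x] that by (simp add: \<Phi>_def)
    have on_R: "t1 r = t2 r" if "r \<in> R" for r
      using fun_cong[OF arg_cong[OF eq, of snd], of r] that by (simp add: \<Phi>_def)
    show "t1 = t2"
    proof (rule commuting_perm_eqI[OF t1 t2 reps])
      show "t1 x = t2 x" if "x \<in> {1..n}" "h x = x" for x using that on_F by (simp add: F_def)
    qed (simp_all add: on_R)
  qed
  moreover have "finite T"
    unfolding T_def F_def by (intro finite_cartesian_product finite_permutations finite_PiE finR finM) simp_all
  ultimately have "card C \<le> card T" by (intro card_inj_on_le)
  also have "card T = fact (n - ?k) * ?k ^ card R"
    unfolding T_def card_cartesian_product card_permutations[OF cardF finF] card_funcsetE[OF finR]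
    by (simp add: supp_def)
  finally show ?thesis by (simp add: C_def)
qed

lemma card_centralizer_le:
  assumes h: "h \<in> Sym n"
  shows "card {t \<in> Sym n. t \<circ> h = h \<circ> t} \<le> fact (n - supp h) * supp h ^ (supp h div 2)"
proof -
  obtain R where R: "R \<subseteq> {x. h x \<noteq> x}" "2 * card R \<le> supp h"
    and reps: "\<And>x. h x \<noteq> x \<Longrightarrow> \<exists>r\<in>R. \<exists>j. x = (h ^^ j) r"
    using permutation_cycle_representatives[OF Sym_permutation[OF h]] unfolding supp_def by blast
  have "card {t \<in> Sym n. t \<circ> h = h \<circ> t} \<le> fact (n - supp h) * supp h ^ card R"
    by (rule card_centralizer_le_reps[OF h R(1) reps])
  also have "\<dots> \<le> fact (n - supp h) * supp h ^ (supp h div 2)"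
    using R(2) by (cases "supp h = 0") (auto intro!: power_increasing)
  finally show ?thesis .
qed

lemma conj_prob_le:
  assumes H: "H \<subseteq> Sym n" and h: "h \<in> Sym n"
  shows "conj_prob n (H - {id}) h
    \<le> real (card {h' \<in> H. supp h' = supp h}) * (fact (n - supp h) * supp h ^ (supp h div 2)) / fact n"
proof -
  let ?I = "{h' \<in> H. supp h' = supp h}" and ?B = "fact (n - supp h) * supp h ^ (supp h div 2)"
  have finI: "finite ?I" using H finite_subset[OF _ Sym_finite] by auto
  have "{s \<in> Sym n. s \<circ> h \<circ> inv s \<in> H - {id}} \<subseteq> (\<Union>h'\<in>?I. {s \<in> Sym n. s \<circ> h \<circ> inv s = h'})"
    using supp_conj by fastforce
  then have "card {s \<in> Sym n. s \<circ> h \<circ> inv s \<in> H - {id}} \<le> card (\<Union>h'\<in>?I. {s \<in> Sym n. s \<circ> h \<circ> inv s = h'})"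
    using finI by (intro card_mono) auto
  also have "\<dots> \<le> (\<Sum>h'\<in>?I. card {s \<in> Sym n. s \<circ> h \<circ> inv s = h'})" by (rule card_UN_le[OF finI])
  also have "\<dots> \<le> (\<Sum>h'\<in>?I. ?B)"
    by (intro sum_mono order.trans[OF card_conj_eq_le_centralizer[OF h] card_centralizer_le[OF h]])
  finally have "real (card {s \<in> Sym n. s \<circ> h \<circ> inv s \<in> H - {id}}) \<le> real (card ?I) * ?B"
    by (simp flip: of_nat_mult)
  then show ?thesis by (simp add: conj_prob_def divide_right_mono)
qed

section \<open>Estimates\<close>

lemma fact_eq_fact_diff_mult_prod:
  "k \<le> n \<Longrightarrow> (fact n :: real) = fact (n - k) * (\<Prod>i<k. real (n - i))"
proof (induction k)
  case (Suc k)
  then have "n - k = Suc (n - Suc k)" by simp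
  then have "(fact (n - k) :: real) = real (n - k) * fact (n - Suc k)" by simp
  with Suc show ?case by (simp add: mult_ac)
qed simp

lemma power_self_div_fact_le_exp: "real k ^ k / fact k \<le> exp (real k)"
proof -
  have s: "(\<lambda>i. real k ^ i /\<^sub>R fact i) sums exp (real k)" by (rule exp_converges)
  have "sum (\<lambda>i. real k ^ i /\<^sub>R fact i) {k} \<le> suminf (\<lambda>i. real k ^ i /\<^sub>R fact i)"
    by (rule sum_le_suminf[OF sums_summable[OF s]]) auto
  then show ?thesis using sums_unique[OF s] by (simp add: divide_inverse mult.commute)
qed

lemma prod_falling_lower_bound:
  assumes "k \<le> n" "0 < k"
  shows "real n ^ k * fact k / real k ^ k \<le> (\<Prod>i<k. real (n - i))"
proof -
  have "(\<Prod>i<k. real n / real k * real (k - i)) \<le> (\<Prod>i<k. real (n - i))"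
  proof (rule prod_mono, rule conjI)
    fix i assume "i \<in> {..<k}"
    then have i: "i < k" by simp
    show "0 \<le> real n / real k * real (k - i)" by simp
    have "real i * real k \<le> real i * real n" using assms by (simp add: mult_left_mono)
    then have "real n * real (k - i) \<le> real k * real (n - i)"
      using i assms by (simp add: of_nat_diff algebra_simps)
    then show "real n / real k * real (k - i) \<le> real (n - i)"
      using assms by (simp add: field_simps)
  qed
  moreover have "(\<Prod>i<k. real (k - i)) = fact k"
    by (simp add: fact_prod_rev[of k] atLeast0LessThan)
  then have "(\<Prod>i<k. real n / real k * real (k - i)) = (real n / real k) ^ k * fact k"
    by (simp only: prod.distrib prod_constant card_lessThan)
  ultimately show ?thesis by (simp add: power_divide)
qed

lemma fact_diff_div_fact_le:
  assumes "0 < k" "k \<le> n"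
  shows "fact (n - k) / (fact n :: real) \<le> exp (real k) / real n ^ k"
proof -
  define P where "P = (\<Prod>i<k. real (n - i))"
  have P: "real n ^ k * fact k / real k ^ k \<le> P"
    unfolding P_def by (rule prod_falling_lower_bound[OF assms(2,1)])
  have pos: "0 < real n ^ k * fact k / real k ^ k" using assms by simp
  then have "0 < P" using P by linarith
  have "fact (n - k) / (fact n :: real) = 1 / P"
    using fact_eq_fact_diff_mult_prod[OF assms(2)] \<open>0 < P\<close> by (simp add: P_def)
  also have "\<dots> \<le> 1 / (real n ^ k * fact k / real k ^ k)"
    by (rule divide_left_mono[OF P]) (use mult_pos_pos[OF \<open>0 < P\<close> pos] in simp_all)
  also have "\<dots> = (real k ^ k / fact k) / real n ^ k" by simp
  also have "\<dots> \<le> exp (real k) / real n ^ k"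
    using power_self_div_fact_le_exp[of k] assms by (intro divide_right_mono) auto
  finally show ?thesis .
qed

lemma support_term_le:
  assumes k: "1 \<le> k" "k \<le> n" and c: "0 \<le> c" "c \<le> real n powr (real k / 7)"
  shows "c\<^sup>2 * (fact (n - k) * real k ^ (k div 2) / fact n) \<le> (exp 1 * real n powr (-3/14)) ^ k"
proof -
  have n0: "0 < real n" using k by simp
  have "c\<^sup>2 \<le> (real n powr (real k / 7))\<^sup>2" using c by (intro power_mono) auto
  also have "\<dots> = real n powr (2 * (real k / 7))" using n0 by (simp add: powr_power)
  finally have c2: "c\<^sup>2 \<le> real n powr (2 * (real k / 7))" .
  have "real k ^ (k div 2) \<le> real n ^ (k div 2)" using k by (simp add: power_mono)
  also have "\<dots> = real n powr real (k div 2)" using n0 by (simp add: powr_realpow)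
  also have "\<dots> \<le> real n powr (real k / 2)" using k by (intro powr_mono) (auto simp: real_of_nat_div)
  finally have kk: "real k ^ (k div 2) \<le> real n powr (real k / 2)" .
  have "c\<^sup>2 * (fact (n - k) * real k ^ (k div 2) / fact n) = c\<^sup>2 * real k ^ (k div 2) * (fact (n - k) / fact n)"
    by simp
  also have "\<dots> \<le> real n powr (2 * (real k / 7)) * real n powr (real k / 2) * (exp (real k) / real n powr real k)"
    using k n0 by (simp only: powr_realpow) (intro mult_mono c2 kk fact_diff_div_fact_le, auto)
  also have "\<dots> = exp (real k) * real n powr (2 * (real k / 7) + real k / 2 - real k)"
    unfolding powr_diff powr_add by (simp add: field_simps)
  also have "2 * (real k / 7) + real k / 2 - real k = real k * (-3/14)" by (simp add: field_simps)
  also have "exp (real k) * real n powr (real k * (-3/14)) = (exp 1 * real n powr (-3/14)) ^ k"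
    using n0 by (simp add: powr_power power_mult_distrib exp_of_nat_mult[symmetric])
  finally show ?thesis .
qed

lemma sum_power_le_twice_first:
  fixes q :: real
  assumes "0 \<le> q" "q \<le> 1/2"
  shows "(\<Sum>k=a..b. q ^ k) \<le> 2 * q ^ a"
proof (cases "b < a")
  case False
  have "(\<Sum>k=a..b. q ^ k) = (q ^ a - q ^ Suc b) / (1 - q)"
    using False assms by (simp add: sum_gp)
  also have "\<dots> \<le> q ^ a / (1 - q)" using assms by (intro divide_right_mono) auto
  also have "\<dots> \<le> q ^ a / (1/2)" using assms by (intro divide_left_mono) auto
  finally show ?thesis by simp
qed (use assms in simp)

lemma sum_conj_prob_le_geometric:
  assumes H: "H \<subseteq> Sym n"
    and count: "\<forall>k\<le>n. real (card {h \<in> H. supp h = k}) \<le> real n powr (real k / 7)"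
    and large_supp: "\<forall>h\<in>H - {id}. K < supp h"
    and q: "exp 1 * real n powr (-3/14) \<le> 1/2"
  shows "(\<Sum>h\<in>H - {id}. conj_prob n (H - {id}) h) \<le> 2 * (exp 1 * real n powr (-3/14)) ^ (K + 1)"
proof -
  let ?H = "H - {id}" and ?q = "exp 1 * real n powr (-3/14)"
  define c where "c k = real (card {h \<in> H. supp h = k})" for k
  define B where "B k = fact (n - k) * real k ^ (k div 2) / (fact n :: real)" for k
  have finH: "finite ?H" using H finite_subset[OF _ Sym_finite] by blast
  have supp_range: "supp h \<in> {K+1..n}" if "h \<in> ?H" for h
  proof -
    have "K < supp h" using that large_supp by blast
    moreover have "supp h \<le> n" using that H supp_le by blast
    ultimately show ?thesis by simp
  qed
  have "(\<Sum>h\<in>?H. conj_prob n ?H h) \<le> (\<Sum>h\<in>?H. c (supp h) * B (supp h))"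
    using H conj_prob_le by (intro sum_mono) (auto simp: c_def B_def)
  also have "\<dots> = (\<Sum>k\<in>supp ` ?H. \<Sum>h\<in>{h \<in> ?H. supp h = k}. c (supp h) * B (supp h))"
    by (rule sum.image_gen[OF finH])
  also have "\<dots> = (\<Sum>k\<in>supp ` ?H. \<Sum>h\<in>{h \<in> ?H. supp h = k}. c k * B k)"
    by (intro sum.cong refl) auto
  also have "\<dots> = (\<Sum>k\<in>supp ` ?H. real (card {h \<in> ?H. supp h = k}) * (c k * B k))"
    by simp
  also have "\<dots> \<le> (\<Sum>k\<in>supp ` ?H. c k * (c k * B k))"
    using H by (intro sum_mono mult_right_mono) (auto simp: c_def B_def intro!: card_mono finite_subset[OF _ Sym_finite])
  also have "\<dots> = (\<Sum>k\<in>supp ` ?H. (c k)\<^sup>2 * B k)" by (simp add: power2_eq_square mult.assoc)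
  also have "\<dots> \<le> (\<Sum>k=K+1..n. (c k)\<^sup>2 * B k)"
    by (rule sum_mono2[OF finite_atLeastAtMost image_subsetI[OF supp_range]]) (simp_all add: B_def)
  also have "\<dots> \<le> (\<Sum>k=K+1..n. ?q ^ k)"
  proof (rule sum_mono)
    fix k assume "k \<in> {K+1..n}"
    then show "(c k)\<^sup>2 * B k \<le> ?q ^ k"
      unfolding B_def using count by (intro support_term_le) (auto simp: c_def)
  qed
  also have "\<dots> \<le> 2 * ?q ^ (K + 1)"
    using q by (intro sum_power_le_twice_first) auto
  finally show ?thesis .
qed

lemma D_H_le_geometric:
  assumes "H \<subseteq> Sym n"
    and "\<forall>k\<le>n. real (card {h \<in> H. supp h = k}) \<le> real n powr (real k / 7)"
    and "\<forall>h\<in>H - {id}. K < supp h"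
    and "exp 1 * real n powr (-3/14) \<le> 1/2"
  shows "D_H n H \<le> sqrt (2 * (exp 1 * real n powr (-3/14)) ^ (K + 1))"
  using D_H_le_sqrt_sum_conj_prob[OF assms(1)] sum_conj_prob_le_geometric[OF assms]
    real_sqrt_le_mono order_trans by blast

lemma supp_gt_if_min_degree_gt:
  assumes "enat K < min_degree H" "h \<in> H - {id}"
  shows "K < supp h"
proof -
  have "min_degree H \<le> enat (supp h)" unfolding min_degree_def using assms(2) by (rule INF_lower)
  with assms(1) have "enat K < enat (supp h)" by (rule order.strict_trans2)
  then show ?thesis by simp
qed

lemma exp_mult_powr_le_half:
  assumes "(2 * exp 1) ^ 5 \<le> real n"
  shows "exp 1 * real n powr (-3/14) \<le> 1/2"
proof -
  have pos: "0 < 2 * exp (1::real)" by simp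
  have "((2 * exp 1) ^ 5) powr (3/14) = (2 * exp 1) powr (real 5 * (3/14))"
    by (simp only: powr_realpow[OF pos, symmetric] powr_powr)
  moreover have "(2 * exp 1) powr 1 \<le> (2 * exp 1) powr (real 5 * (3/14))"
  proof (rule powr_mono)
    have "1 \<le> exp (1::real)" by simp
    then show "1 \<le> 2 * exp (1::real)" by linarith
  qed simp
  ultimately have "2 * exp 1 \<le> ((2 * exp 1) ^ 5) powr (3/14 :: real)" by simp
  also have "\<dots> \<le> real n powr (3/14)" using assms by (intro powr_mono2) auto
  finally have "2 * exp 1 \<le> real n powr (3/14)" .
  moreover have "0 < (2 * exp 1 :: real) ^ 5" by simp
  then have "0 < real n" using assms by linarith
  ultimately show ?thesis by (simp add: powr_minus field_simps)
qed

lemma ln_fact_le_square: "ln (fact n) \<le> real n ^ 2"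
proof (cases "n = 0")
  case False
  then have n: "0 < real n" by simp
  have "ln (fact n) \<le> ln (real n ^ n)"
    using fact_le_power[where 'a = real, of n] n by simp
  also have "\<dots> = real n * ln (real n)" using n by (simp add: ln_realpow)
  also have "\<dots> \<le> real n * real n" using n less_imp_le[OF ln_less_self[OF n]] by (intro mult_left_mono) auto
  finally show ?thesis by (simp add: power2_eq_square)
qed simp

lemma powr_le_ln_fact_powr:
  assumes n: "2 \<le> n" and c: "0 < c"
  shows "real n powr (-2 * c) \<le> ln (fact n) powr (-c)"
proof -
  have "(2::real) \<le> fact n" using fact_ge_self[of n] n by (metis fact_2 fact_mono of_nat_fact order_trans)
  then have "0 < ln (fact n :: real)" by simp
  then have "(real n ^ 2) powr (-c) \<le> ln (fact n) powr (-c)"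
    using c ln_fact_le_square by (intro powr_mono2') auto
  moreover have "(real n ^ 2) powr (-c) = real n powr (-2 * c)"
    by (simp add: power2_eq_square powr_mult powr_add[symmetric])
  ultimately show ?thesis by simp
qed

text \<open>The hypothesis on \<open>K\<close> says \<open>3 (K + 1) / 14 \<ge> 4 c + 1\<close>.\<close>
lemma geometric_bound_lt_powr:
  assumes c: "0 < c" and K: "(56 * c + 14) / 3 \<le> real K" and n: "2 * exp 1 ^ (K + 1) < real n"
  shows "sqrt (2 * (exp 1 * real n powr (-3/14)) ^ (K + 1)) < real n powr (-2 * c)"
proof -
  have "1 \<le> exp (1::real)" by simp
  then have "1 \<le> exp (1::real) ^ (K + 1)" by (rule one_le_power)
  then have n1: "2 \<le> real n" using n by linarith
  have "(exp 1 * real n powr (-3/14)) ^ (K + 1) = exp 1 ^ (K + 1) * real n powr (real (K + 1) * (-3/14))"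
    unfolding power_mult_distrib by (subst powr_power) (use n1 in auto)
  also have "\<dots> \<le> exp 1 ^ (K + 1) * real n powr (-4 * c - 1)"
    using K n1 by (intro mult_left_mono powr_mono) (auto simp: field_simps)
  also have "\<dots> = (exp 1 ^ (K + 1) / real n) * real n powr (-4 * c)"
    using n1 by (simp add: powr_diff)
  finally have "2 * (exp 1 * real n powr (-3/14)) ^ (K + 1) \<le> (2 * exp 1 ^ (K + 1) / real n) * real n powr (-4 * c)"
    by simp
  also have "\<dots> < 1 * real n powr (-4 * c)"
    using n n1 by (intro mult_strict_right_mono) auto
  finally have "sqrt (2 * (exp 1 * real n powr (-3/14)) ^ (K + 1)) < sqrt (real n powr (-4 * c))"
    by (simp add: real_sqrt_less_mono)
  also have "\<dots> = real n powr (-2 * c)"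
    using n1 powr_half_sqrt_powr[of "real n" "-4 * c"] by simp
  finally show ?thesis .
qed

lemma D_H_lt_ln_card_Sym_powr:
  assumes H: "H \<subseteq> Sym n"
    and count: "\<forall>k\<le>n. real (card {h \<in> H. supp h = k}) \<le> real n powr (real k / 7)"
    and min_degree: "enat K < min_degree H"
    and c: "0 < c" and K: "(56 * c + 14) / 3 \<le> real K"
    and n: "(2 * exp 1) ^ 5 + 2 * exp 1 ^ (K + 1) + 1 \<le> real n"
  shows "D_H n H < ln (real (card (Sym n))) powr - c"
proof -
  have "2 \<le> (2 * exp 1 :: real) ^ 5"
  proof -
    have e: "1 \<le> exp (1::real)" by simp
    then have "1 \<le> 2 * exp (1::real)" by linarith
    then have "2 * exp 1 \<le> (2 * exp 1 :: real) ^ 5" by (rule self_le_power) simp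
    with e show ?thesis by linarith
  qed
  moreover have "0 < exp (1::real) ^ (K + 1)" by simp
  ultimately have n_large: "(2 * exp 1) ^ 5 \<le> real n" "2 * exp 1 ^ (K + 1) < real n" "2 \<le> n"
    using n by linarith+
  have "D_H n H \<le> sqrt (2 * (exp 1 * real n powr (-3/14)) ^ (K + 1))"
    using H count supp_gt_if_min_degree_gt[OF min_degree] exp_mult_powr_le_half[OF n_large(1)]
    by (intro D_H_le_geometric) auto
  also have "\<dots> < real n powr (-2 * c)"
    by (rule geometric_bound_lt_powr[OF c K n_large(2)])
  also have "\<dots> \<le> ln (real (card (Sym n))) powr - c"
    using powr_le_ln_fact_powr[OF n_large(3) c] by (simp add: card_Sym)
  finally show ?thesis .
qed

theorem proposition1:
  fixes I :: "nat set" and H :: "nat \<Rightarrow> (nat \<Rightarrow> nat) set"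
  assumes "infinite I" and "\<forall>n\<in>I. n > 0"
    and "\<forall>n\<in>I. is_subgroup_Sym n (H n)"
    and "\<forall>K::nat. infinite {n\<in>I. min_degree (H n) > enat K}"
    and "\<forall>n\<in>I. \<forall>k\<le>n. real (card {h\<in>H n. supp h = k}) \<le> real n powr (real k / 7)"
  shows "indistinguishable I H"
  unfolding indistinguishable_def distinguishable_def
proof
  assume "\<exists>c>0. \<exists>N. \<forall>n\<in>I. N \<le> n \<longrightarrow> ln (real (card (Sym n))) powr - c \<le> D_H n (H n)"
  then obtain c N where c: "0 < c"
    and dist: "\<forall>n\<in>I. N \<le> n \<longrightarrow> ln (real (card (Sym n))) powr - c \<le> D_H n (H n)"
    by blast
  define K where "K = nat \<lceil>(56 * c + 14) / 3\<rceil>"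
  have K: "(56 * c + 14) / 3 \<le> real K" unfolding K_def by (rule real_nat_ceiling_ge)
  define x :: real where "x = (2 * exp 1) ^ 5 + 2 * exp 1 ^ (K + 1) + 1"
  obtain n where n: "n \<in> I" "nat \<lceil>x\<rceil> + N \<le> n" "enat K < min_degree (H n)"
    using assms(4) unfolding infinite_nat_iff_unbounded_le by blast
  have "x \<le> real n" using real_nat_ceiling_ge[of x] n(2) by linarith
  then have "D_H n (H n) < ln (real (card (Sym n))) powr - c"
    using assms(3,5) n(1) unfolding x_def
    by (intro D_H_lt_ln_card_Sym_powr[OF _ _ n(3) c K]) (auto simp: is_subgroup_Sym_def)
  moreover have "ln (real (card (Sym n))) powr - c \<le> D_H n (H n)"
    using dist n(1,2) by simp
  ultimately show False by simp
qed

end
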